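(* Let $d_1>0$, $d_2>0$, $y_\star>0$ satisfy $d_1d_2<\frac{1}{4y_\star^2}$, and let $K_P\ge 0$, $K_I>0$, $u_0\in\mathbb{R}$. Consider the system on $\mathbb{R}^3$ with state $\chi=(\chi_1,\chi_2,\chi_3)=(x_1,x_2,x_c)$ given by $$\dot x_1 = -d_1x_1+1 - x_2 u,\qquad \dot x_2 = -d_2 x_2 + x_1 u,\qquad \dot x_c = y_\star - x_2,\qquad u = u_0 + K_I x_c + K_P (y_\star - x_2),$$ i.e. $$\dot\chi=\begin{pmatrix}-d_1\chi_1+1-u_0\chi_2-K_I\chi_2\chi_3-K_P\chi_2 y_\star+K_P\chi_2^2\\ -d_2\chi_2+u_0\chi_1+K_I\chi_1\chi_3+K_P\chi_1 y_\star-K_P\chi_1\chi_2\\ -\chi_2+y_\star\end{pmatrix}=:f(\chi).$$ Define $r:=\tfrac12\sqrt{1-4d_1d_2y_\star^2}>0$. Then: (C1) The closed-loop system has exactly two equilibrium points (both with $\chi_2=y_\star$), namely $$\bar\chi^u=\Big(\tfrac{1}{2d_1}\big(1-\sqrt{1-4d_1d_2y_\star^2}\big),\ y_\star,\ \tfrac{1}{K_Iy_\star}\big(1-d_1\bar\chi^u_1-u_0y_\star\big)\Big),$$ $$\bar\chi^s=\Big(\tfrac{1}{2d_1}\big(1+\sqrt{1-4d_1d_2y_\star^2}\big),\ y_\star,\ \tfrac{1}{K_Iy_\star}\big(1-d_1\bar\chi^s_1-u_0y_\star\big)\Big).$$ (C2) The equilibrium $\bar\chi^u$ (minimal current) is unstable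 for all choices of $K_P\ge0$, $K_I>0$, $u_0\in\mathbb{R}$. (C3) The equilibrium $\bar\chi^s$ (maximal current) is locally asymptotically stable provided $K_P\ge \tfrac12 d_1^2$ and $K_I\ge \tfrac{5}{16}\,\tfrac{d_1}{y_\star^2}$. (C4) Under the conditions of (C3), let $A:=\nabla f(\bar\chi^s)$ be the Jacobian of $f$ at $\bar\chi^s$, let $Q\in\mathbb{R}^{3\times3}$ be any positive definite matrix and let $P\in\mathbb{R}^{3\times 3}$ be the positive definite solution of $A^\top P+PA=-Q$. Then for $\rho_{\mathcal D}>0$ sufficiently small, the set $\mathcal{D}:=\{\chi\in\mathbb{R}^3 : (\chi-\bar\chi^s)^\top P(\chi-\bar\chi^s)\le\rho_{\mathcal D}\}$ is contained in the domain of attraction of $\bar\chi^s$.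
   Context: This is the (time- and state-scaled) averaged model of a DC-DC Boost converter: $x_1$ is the scaled inductor current, $x_2$ the scaled capacitor (output) voltage, $u$ the duty cycle, $d_1>0$ the scaled inductor (parasitic) resistance, $d_2>0$ the scaled load conductance, and the scaled source voltage is $1$. The controller is a PI controller acting on the voltage error $y_\star-x_2$, where $y_\star>0$ is the desired output voltage, $x_c$ is the integrator state, $K_P,K_I$ are the PI gains and $u_0$ is a designer-chosen constant. Stability notions are in the sense of Lyapunov. *)

theory Defs
  imports "HOL-Analysis.Analysis"
begin

definition boost_f :: "real \<Rightarrow> real \<Rightarrow> real \<Rightarrow> real \<Rightarrow> real \<Rightarrow> real \<Rightarrow> real^3 \<Rightarrow> real^3" where
  "boost_f d1 d2 ys KP KI u0 z =
     vector [ - d1 * z$1 + 1 - u0 * z$2 - KI * z$2 * z$3 - KP * z$2 * ys + KP * (z$2)^2,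
              - d2 * z$2 + u0 * z$1 + KI * z$1 * z$3 + KP * z$1 * ys - KP * z$1 * z$2,
              - z$2 + ys ]"

definition chi_u :: "real \<Rightarrow> real \<Rightarrow> real \<Rightarrow> real \<Rightarrow> real \<Rightarrow> real^3" where
  "chi_u d1 d2 ys KI u0 =
     (let x1 = (1 - sqrt (1 - 4 * d1 * d2 * ys^2)) / (2 * d1)
      in vector [x1, ys, (1 - d1 * x1 - u0 * ys) / (KI * ys)])"

definition chi_s :: "real \<Rightarrow> real \<Rightarrow> real \<Rightarrow> real \<Rightarrow> real \<Rightarrow> real^3" where
  "chi_s d1 d2 ys KI u0 =
     (let x1 = (1 + sqrt (1 - 4 * d1 * d2 * ys^2)) / (2 * d1)
      in vector [x1, ys, (1 - d1 * x1 - u0 * ys) / (KI * ys)])"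

definition ode_sol_on :: "('a::real_normed_vector \<Rightarrow> 'a) \<Rightarrow> (real \<Rightarrow> 'a) \<Rightarrow> real \<Rightarrow> bool" where
  "ode_sol_on f x T \<longleftrightarrow> (\<forall>t\<in>{0..<T}. (x has_vector_derivative f (x t)) (at t within {0..<T}))"

definition ode_sol_global :: "('a::real_normed_vector \<Rightarrow> 'a) \<Rightarrow> (real \<Rightarrow> 'a) \<Rightarrow> bool" where
  "ode_sol_global f x \<longleftrightarrow> (\<forall>t\<ge>0. (x has_vector_derivative f (x t)) (at t within {0..}))"

definition equilibrium :: "('a::real_normed_vector \<Rightarrow> 'a) \<Rightarrow> 'a \<Rightarrow> bool" where
  "equilibrium f xe \<longleftrightarrow> f xe = 0"

definition lyap_stable :: "('a::real_normed_vector \<Rightarrow> 'a) \<Rightarrow> 'a \<Rightarrow> bool" where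
  "lyap_stable f xe \<longleftrightarrow>
     (\<forall>\<epsilon>>0. \<exists>\<delta>>0. \<forall>x T. ode_sol_on f x T \<and> dist (x 0) xe < \<delta> \<longrightarrow>
        (\<forall>t\<in>{0..<T}. dist (x t) xe < \<epsilon>))"

definition unstable :: "('a::real_normed_vector \<Rightarrow> 'a) \<Rightarrow> 'a \<Rightarrow> bool" where
  "unstable f xe \<longleftrightarrow> \<not> lyap_stable f xe"

definition domain_of_attraction :: "('a::real_normed_vector \<Rightarrow> 'a) \<Rightarrow> 'a \<Rightarrow> 'a set" where
  "domain_of_attraction f xe =
     {x0. (\<exists>x. ode_sol_global f x \<and> x 0 = x0) \<and>
          (\<forall>x. ode_sol_global f x \<and> x 0 = x0 \<longrightarrow> (x \<longlongrightarrow> xe) at_top)}"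

definition loc_asym_stable :: "('a::real_normed_vector \<Rightarrow> 'a) \<Rightarrow> 'a \<Rightarrow> bool" where
  "loc_asym_stable f xe \<longleftrightarrow> lyap_stable f xe \<and>
     (\<exists>\<eta>>0. ball xe \<eta> \<subseteq> domain_of_attraction f xe)"

definition pos_def :: "real^3^3 \<Rightarrow> bool" where
  "pos_def M \<longleftrightarrow> transpose M = M \<and> (\<forall>v. v \<noteq> 0 \<longrightarrow> v \<bullet> (M *v v) > 0)"

end

(* Every equilibrium has x2 = ys, and eliminating the integrator state leaves the quadratic
   d1 x1^2 - x1 + d2 ys^2 = 0 for the current, with the two roots (1 -+ S) / (2 d1), where
   S = sqrt (1 - 4 d1 d2 ys^2) lies in (0, 1).

   At an equilibrium the Jacobian is conjugate, by the observability matrix of the integrator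
   state, to the companion matrix of l^3 + a2 l^2 + a1 l + a0 with a2 > 0 and
   a0 = KI (2 d1 x1 - 1) = -+ KI S.  At the minimal-current equilibrium a0 < 0, so there is a
   positive eigenvalue; the resulting indefinite solution P of A^T P + P A = Q > 0 makes
   (x - x^u)^T P (x - x^u) grow along solutions near x^u, which rules out stability.  At the
   maximal-current equilibrium the Routh-Hurwitz conditions a0 > 0, a2 > 0, a1 a2 > a0 hold for
   all KP >= 0 and KI > 0, and Lyapunov's
   indirect method applies: any quadratic Lyapunov function of the linearization decreases at a
   rate comparable to itself on a small sublevel set, which is therefore invariant and attracted.

   Global existence of solutions comes from Picard iteration for the vector field retracted onto
   a closed ball; the Lyapunov estimates keep these solutions inside the ball, where they solve
   the original equation. *)

theory Submission
  imports Defs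
begin

section \<open>Solutions of Lipschitz vector fields\<close>

fun picard :: "('a::banach \<Rightarrow> 'a) \<Rightarrow> 'a \<Rightarrow> nat \<Rightarrow> real \<Rightarrow> 'a" where
  "picard F x0 0 = (\<lambda>t. x0)"
| "picard F x0 (Suc n) = (\<lambda>t. x0 + integral {0..t} (\<lambda>s. F (picard F x0 n s)))"

lemma has_integral_monomial:
  fixes c t :: real
  assumes "0 \<le> t"
  shows "((\<lambda>s. c * s ^ k) has_integral c * t ^ Suc k / Suc k) {0..t}"
proof -
  have "((\<lambda>s. c / Suc k * s ^ Suc k) has_real_derivative c / Suc k * (real (Suc k) * s ^ k))
      (at s within {0..t})" for s :: real
    using DERIV_pow[of "Suc k" s "{0..t}"] unfolding diff_Suc_Suc diff_zero by (rule DERIV_cmult)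
  then have "((\<lambda>s. c / Suc k * s ^ Suc k) has_vector_derivative c * s ^ k) (at s within {0..t})" for s
    by (simp add: has_real_derivative_iff_has_vector_derivative del: of_nat_Suc)
  from fundamental_theorem_of_calculus[OF assms this] show ?thesis by simp
qed

context
  fixes F :: "'a::banach \<Rightarrow> 'a" and L :: real and x0 :: 'a
  assumes lipschitz: "L-lipschitz_on UNIV F"
begin

lemma continuous_on_compose_lipschitz:
  "continuous_on S g \<Longrightarrow> continuous_on S (\<lambda>s. F (g s))"
  using continuous_on_compose[of S g F] lipschitz_on_continuous_on[OF lipschitz]
  by (auto simp: o_def intro: continuous_on_subset)

lemma continuous_on_picard: "continuous_on {0..b} (picard F x0 n)"
proof (induction n)
  case (Suc n)
  have "continuous_on {0..b} (\<lambda>t. integral {0..t} (\<lambda>s. F (picard F x0 n s)))"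
    by (intro indefinite_integral_continuous_1 integrable_continuous_interval
        continuous_on_compose_lipschitz Suc)
  then show ?case by (auto intro: continuous_intros)
qed simp

lemma integrable_picard: "(\<lambda>s. F (picard F x0 n s)) integrable_on {0..t}"
  by (intro integrable_continuous_interval continuous_on_compose_lipschitz continuous_on_picard)

lemma picard_step_bound:
  assumes "0 \<le> t"
  shows "norm (picard F x0 (Suc n) t - picard F x0 n t)
    \<le> norm (F x0) * L ^ n * t ^ Suc n / fact (Suc n)"
  using assms
proof (induction n arbitrary: t)
  case 0
  then show ?case by simp
next
  case (Suc n)
  define c where "c = L * (norm (F x0) * L ^ n / fact (Suc n))"
  have "picard F x0 (Suc (Suc n)) t - picard F x0 (Suc n) t
      = integral {0..t} (\<lambda>s. F (picard F x0 (Suc n) s) - F (picard F x0 n s))"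
    using integral_diff[OF integrable_picard[of "Suc n" t] integrable_picard[of n t]] by simp
  also have "norm \<dots> \<le> integral {0..t} (\<lambda>s. c * s ^ Suc n)"
  proof (rule integral_norm_bound_integral)
    show "(\<lambda>s. F (picard F x0 (Suc n) s) - F (picard F x0 n s)) integrable_on {0..t}"
      by (intro integrable_diff integrable_picard)
    show "(\<lambda>s. c * s ^ Suc n) integrable_on {0..t}"
      using has_integral_monomial[OF Suc.prems] by blast
  next
    fix s assume s: "s \<in> {0..t}"
    have "norm (F (picard F x0 (Suc n) s) - F (picard F x0 n s))
        \<le> L * norm (picard F x0 (Suc n) s - picard F x0 n s)"
      using lipschitz_on_normD[OF lipschitz] by simp
    also have "\<dots> \<le> c * s ^ Suc n"
      using Suc.IH[of s] s lipschitz_on_nonneg[OF lipschitz]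
      by (auto simp: c_def intro: order_trans[OF mult_left_mono])
    finally show "norm (F (picard F x0 (Suc n) s) - F (picard F x0 n s)) \<le> c * s ^ Suc n" .
  qed
  also have "\<dots> = c * t ^ Suc (Suc n) / Suc (Suc n)"
    by (rule integral_unique[OF has_integral_monomial[OF Suc.prems]])
  also have "\<dots> = norm (F x0) * L ^ Suc n * t ^ Suc (Suc n) / fact (Suc (Suc n))"
    by (simp add: c_def field_simps)
  finally show ?case .
qed

lemma picard_uniform_limit: "\<exists>X. \<forall>b. uniform_limit {0..b} (picard F x0) X sequentially"
proof -
  define D where "D i t = picard F x0 (Suc i) t - picard F x0 i t" for i t
  have telescope: "picard F x0 n = (\<lambda>t. x0 + (\<Sum>i<n. D i t))" for n
    unfolding D_def by (subst sum_lessThan_telescope) simp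
  have "uniform_limit {0..b} (picard F x0) (\<lambda>t. x0 + (\<Sum>i. D i t)) sequentially" for b
  proof -
    define M where "M i = norm (F x0) * b * (inverse (fact i) * (L * b) ^ i)" for i
    have "uniform_limit {0..b} (\<lambda>n t. \<Sum>i<n. D i t) (\<lambda>t. \<Sum>i. D i t) sequentially"
    proof (rule Weierstrass_m_test)
      show "summable M"
        unfolding M_def by (intro summable_mult summable_exp)
      fix n t assume t: "t \<in> {0..b}"
      have L: "0 \<le> L" by (rule lipschitz_on_nonneg[OF lipschitz])
      have "norm (D n t) \<le> norm (F x0) * L ^ n * t ^ Suc n / fact (Suc n)"
        unfolding D_def using t by (intro picard_step_bound) simp
      also have "\<dots> \<le> norm (F x0) * L ^ n * b ^ Suc n / fact n"
        using t L by (intro frac_le mult_left_mono power_mono fact_mono) auto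
      also have "\<dots> = M n"
        by (simp add: M_def power_mult_distrib field_simps)
      finally show "norm (D n t) \<le> M n" .
    qed
    then show ?thesis
      unfolding telescope by (intro uniform_limit_add uniform_limit_const)
  qed
  then show ?thesis by blast
qed

lemma picard_limit_integral_equation:
  assumes X: "\<And>b. uniform_limit {0..b} (picard F x0) X sequentially" and t: "0 \<le> t"
  shows "X t = x0 + integral {0..t} (\<lambda>s. F (X s))"
proof -
  have "uniform_limit {0..t} (\<lambda>n s. F (picard F x0 n s)) (\<lambda>s. F (X s)) sequentially"
    by (rule uniform_limit_compose_uniformly_continuous_on[where B=UNIV,
          OF X lipschitz_on_uniformly_continuous[OF lipschitz]]) auto
  then obtain I J where I: "\<And>n. ((\<lambda>s. F (picard F x0 n s)) has_integral I n) {0..t}"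
    and J: "((\<lambda>s. F (X s)) has_integral J) {0..t}" and IJ: "I \<longlonglongrightarrow> J"
    by (rule uniform_limit_integral) (auto intro: continuous_on_compose_lipschitz continuous_on_picard)
  have "(\<lambda>n. picard F x0 (Suc n) t) \<longlonglongrightarrow> x0 + J"
    using tendsto_add[OF tendsto_const IJ] by (simp add: integral_unique[OF I])
  moreover have "(\<lambda>n. picard F x0 (Suc n) t) \<longlonglongrightarrow> X t"
    using tendsto_uniform_limitI[OF X, of t t] t by (intro LIMSEQ_Suc) simp
  ultimately show ?thesis
    using LIMSEQ_unique integral_unique[OF J] by metis
qed

theorem lipschitz_global_solution: "\<exists>x. ode_sol_global F x \<and> x 0 = x0"
proof -
  obtain X where X: "\<And>b. uniform_limit {0..b} (picard F x0) X sequentially"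
    using picard_uniform_limit by blast
  have contX: "continuous_on {0..b} (\<lambda>s. F (X s))" for b
    by (intro continuous_on_compose_lipschitz uniform_limit_theorem[OF _ X])
      (simp_all add: continuous_on_picard)
  have "(X has_vector_derivative F (X t)) (at t within {0..})" if t: "0 \<le> t" for t
  proof -
    have "((\<lambda>u. x0 + integral {0..u} (\<lambda>s. F (X s))) has_vector_derivative F (X t))
        (at t within {0..t+1})"
      using t by (auto intro!: derivative_eq_intros integral_has_vector_derivative contX)
    then have "(X has_vector_derivative F (X t)) (at t within {0..t+1})"
      by (rule has_vector_derivative_transform[rotated 2])
        (use t picard_limit_integral_equation[OF X] in auto)
    moreover have "at t within {0..t+1} = at t within {0..}"
      by (rule at_within_nhd[of _ "{..<t+1}"]) (use t in auto)
    ultimately show ?thesis by simp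
  qed
  moreover have "X 0 = x0"
    using picard_limit_integral_equation[OF X, of 0] by simp
  ultimately show ?thesis
    unfolding ode_sol_global_def by blast
qed

end

lemma lipschitz_on_comp_closest_point:
  fixes f :: "'a::euclidean_space \<Rightarrow> 'b::metric_space"
  assumes "L-lipschitz_on S f" "convex S" "closed S" "S \<noteq> {}"
  shows "L-lipschitz_on UNIV (f \<circ> closest_point S)"
proof -
  have "1-lipschitz_on UNIV (closest_point S)"
    using closest_point_lipschitz[OF assms(2-4)] by (auto intro: lipschitz_onI)
  moreover have "L-lipschitz_on (closest_point S ` UNIV) f"
    using assms(1) closest_point_in_set[OF assms(3,4)] by (auto intro: lipschitz_on_subset)
  ultimately show ?thesis
    using lipschitz_on_compose by fastforce
qed

lemma truncated_global_solution:
  fixes f :: "'a::euclidean_space \<Rightarrow> 'a"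
  assumes "L-lipschitz_on (cball c r) f" and "0 \<le> r"
  obtains y where "ode_sol_global (f \<circ> closest_point (cball c r)) y" "y 0 = y0"
proof -
  have "L-lipschitz_on UNIV (f \<circ> closest_point (cball c r))"
    using assms by (intro lipschitz_on_comp_closest_point) auto
  then show ?thesis
    using lipschitz_global_solution that by blast
qed

lemma comp_closest_point_cball:
  "norm (z - c) \<le> r \<Longrightarrow> (f \<circ> closest_point (cball c r)) z = f z"
  by (simp add: closest_point_self dist_norm norm_minus_commute)

lemma ode_sol_global_imp_on: "ode_sol_global f x \<Longrightarrow> ode_sol_on f x T"
  unfolding ode_sol_global_def ode_sol_on_def
  by (auto intro: has_vector_derivative_within_subset[where S="{0..}"])

lemma ode_sol_global_cong:
  assumes "ode_sol_global g x" and "\<And>t. 0 \<le> t \<Longrightarrow> g (x t) = f (x t)"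
  shows "ode_sol_global f x"
  using assms unfolding ode_sol_global_def by simp

lemma ode_sol_on_truncated:
  assumes "ode_sol_global (f \<circ> closest_point (cball c r)) y"
    and "\<And>u. u \<in> {0..<s} \<Longrightarrow> norm (y u - c) \<le> r"
  shows "ode_sol_on f y s"
  unfolding ode_sol_on_def
proof
  fix u assume u: "u \<in> {0..<s}"
  have "(y has_vector_derivative (f \<circ> closest_point (cball c r)) (y u)) (at u within {0..<s})"
    using ode_sol_global_imp_on[OF assms(1)] u unfolding ode_sol_on_def by blast
  moreover have "(f \<circ> closest_point (cball c r)) (y u) = f (y u)"
    using assms(2)[OF u] by (rule comp_closest_point_cball)
  ultimately show "(y has_vector_derivative f (y u)) (at u within {0..<s})"
    by simp
qed

lemma has_derivative_vec_componentwise: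
  fixes f :: "'a::real_normed_vector \<Rightarrow> real^'n"
  assumes "\<And>i. ((\<lambda>x. f x $ i) has_derivative (\<lambda>h. f' h $ i)) (at a within S)"
  shows "(f has_derivative f') (at a within S)"
proof (subst has_derivative_componentwise_within, intro ballI)
  fix b :: "real^'n" assume "b \<in> Basis"
  then obtain i where b: "b = axis i 1"
    unfolding Basis_vec_def by auto
  have "y \<bullet> b = y $ i" for y :: "real^'n"
    unfolding b by (simp add: inner_axis)
  then show "((\<lambda>x. f x \<bullet> b) has_derivative (\<lambda>x. f' x \<bullet> b)) (at a within S)"
    using assms[of i] by simp
qed

lemma has_derivative_vec_nth [derivative_intros]: "((\<lambda>x. x $ i) has_derivative (\<lambda>h. h $ i)) F"
  by (rule bounded_linear_imp_has_derivative) (rule bounded_linear_vec_nth)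

lemma lipschitz_on_cball_of_continuous_jacobian:
  fixes f :: "real^'n \<Rightarrow> real^'m" and J :: "real^'n \<Rightarrow> real^'n^'m"
  assumes deriv: "\<And>z. (f has_derivative (\<lambda>h. J z *v h)) (at z)"
    and cont: "\<And>i j. continuous_on UNIV (\<lambda>z. J z $ i $ j)"
  shows "\<exists>L. L-lipschitz_on (cball c R) f"
proof -
  have "continuous_on UNIV (\<lambda>z. \<chi> i j. J z $ i $ j)"
    by (intro continuous_on_vec_lambda cont)
  then have "continuous_on (cball c R) J"
    unfolding vec_lambda_eta by (rule continuous_on_subset) simp
  then have "compact (J ` cball c R)"
    by (rule compact_continuous_image[OF _ compact_cball])
  then obtain B where "\<forall>M\<in>J ` cball c R. norm M \<le> B"
    by (meson bounded_iff compact_imp_bounded)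
  then have B: "\<And>z. z \<in> cball c R \<Longrightarrow> norm (J z) \<le> B"
    by blast
  have "onorm (\<lambda>h. J z *v h) \<le> real CARD('m) * real CARD('n) * \<bar>B\<bar>" if "z \<in> cball c R" for z
  proof (rule onorm_le_matrix_component)
    fix i j
    have "\<bar>J z $ i $ j\<bar> \<le> norm (J z $ i)"
      by (rule component_le_norm_cart)
    also have "\<dots> \<le> norm (J z)"
      by (rule Finite_Cartesian_Product.norm_nth_le)
    also have "\<dots> \<le> \<bar>B\<bar>"
      using B[OF that] by simp
    finally show "\<bar>J z $ i $ j\<bar> \<le> \<bar>B\<bar>" .
  qed
  then have "(real CARD('m) * real CARD('n) * \<bar>B\<bar>)-lipschitz_on (cball c R) f"
    by (intro bounded_derivative_imp_lipschitz[OF has_derivative_at_withinI[OF deriv] convex_cball])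
      simp_all
  then show ?thesis ..
qed

section \<open>Matrices and quadratic forms\<close>

lemma inner_transpose_matrix:
  fixes A :: "real^'n^'m"
  shows "x \<bullet> (transpose A *v y) = (A *v x) \<bullet> y"
  using dot_lmul_matrix[of y A x] by (simp add: inner_commute)

lemma inner_symmetric_matrix:
  fixes P :: "real^'n^'n"
  assumes "transpose P = P"
  shows "a \<bullet> (P *v b) = b \<bullet> (P *v a)"
  using inner_transpose_matrix[of a P b] assms by (simp add: inner_commute)

lemma matrix_vector_mult_uminus_left: "(- A) *v x = - (A *v x)"
  for A :: "'a::ring_1^'n^'m"
  by (simp add: vec_eq_iff matrix_vector_mult_def sum_negf)

lemma scaleR_matrix_vector_mult: "(k *\<^sub>R A) *v x = k *\<^sub>R (A *v x)"
  for A :: "real^'n^'m"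
  by (simp add: vec_eq_iff matrix_vector_mult_def sum_distrib_left mult.assoc)

lemma matrix_add_rdistrib: "(B + C) ** A = B ** A + C ** A"
  for A :: "'a::semiring_1^'n^'k" and B C :: "'a^'k^'m"
  by (simp add: matrix_matrix_mult_def vec_eq_iff sum.distrib distrib_right)

lemma matrix_uminus_sandwich: "transpose T ** (- M) ** T = - (transpose T ** M ** T)"
  for M T :: "real^'n^'n"
  by (simp add: vec_eq_iff matrix_matrix_mult_def sum_negf)

lemma quadratic_form_lyapunov_equation:
  fixes A P M :: "real^'n^'n"
  assumes "transpose P = P" "transpose A ** P + P ** A = M"
  shows "2 * (e \<bullet> (P *v (A *v e))) = e \<bullet> (M *v e)"
proof -
  have "e \<bullet> (M *v e) = e \<bullet> (transpose A *v (P *v e)) + e \<bullet> (P *v (A *v e))"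
    unfolding assms(2)[symmetric]
    by (simp add: matrix_vector_mult_add_rdistrib inner_add_right matrix_vector_mul_assoc)
  also have "e \<bullet> (transpose A *v (P *v e)) = e \<bullet> (P *v (A *v e))"
    unfolding inner_transpose_matrix by (rule inner_symmetric_matrix[OF assms(1)])
  finally show ?thesis by simp
qed

lemma lyapunov_equation_similarity:
  fixes A C T P M :: "real^'n^'n"
  assumes "T ** A = C ** T" and "transpose C ** P + P ** C = M"
  shows "transpose A ** (transpose T ** P ** T) + (transpose T ** P ** T) ** A = transpose T ** M ** T"
proof -
  have "transpose A ** (transpose T ** P ** T) = transpose T ** (transpose C ** P) ** T"
    using arg_cong[OF assms(1), of transpose] by (simp add: matrix_mul_assoc matrix_transpose_mul)
  moreover have "(transpose T ** P ** T) ** A = transpose T ** (P ** C) ** T"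
    using assms(1) by (simp add: matrix_mul_assoc[symmetric])
  ultimately show ?thesis
    unfolding assms(2)[symmetric] by (simp add: matrix_add_ldistrib matrix_add_rdistrib)
qed

lemma matrix_quadratic_form_bound:
  fixes P :: "real^'n^'n"
  obtains K where "K > 0" "\<And>v. norm (P *v v) \<le> K * norm v" "\<And>v. \<bar>v \<bullet> (P *v v)\<bar> \<le> K * (norm v)\<^sup>2"
proof -
  obtain K where K: "K > 0" "\<And>v. norm (P *v v) \<le> K * norm v"
    using bounded_linear.pos_bounded[OF matrix_vector_mul_bounded_linear[of P]]
    by (auto simp: mult.commute)
  have "\<bar>v \<bullet> (P *v v)\<bar> \<le> K * (norm v)\<^sup>2" for v
  proof -
    have "\<bar>v \<bullet> (P *v v)\<bar> \<le> norm v * norm (P *v v)"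
      by (rule Cauchy_Schwarz_ineq2)
    also have "\<dots> \<le> norm v * (K * norm v)"
      using K(2) by (rule mult_left_mono) simp
    finally show ?thesis
      by (simp add: power2_eq_square mult_ac)
  qed
  with K that show ?thesis by blast
qed

lemma quadratic_form_less_near_center:
  fixes P :: "real^'n^'n"
  assumes K: "K > 0" "\<And>v. \<bar>v \<bullet> (P *v v)\<bar> \<le> K * (norm v)\<^sup>2"
    and z: "norm (z - c) < sqrt (\<rho> / K)"
  shows "(z - c) \<bullet> (P *v (z - c)) < \<rho>"
proof -
  have "(z - c) \<bullet> (P *v (z - c)) \<le> K * (norm (z - c))\<^sup>2"
    using K(2) abs_le_iff by blast
  also have "\<dots> < K * (sqrt (\<rho> / K))\<^sup>2"
    using K(1) z by (intro mult_strict_left_mono power_strict_mono) auto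
  also have "\<dots> = \<rho>"
  proof -
    have "0 \<le> sqrt (\<rho> / K)"
      using z norm_ge_zero[of "z - c"] by linarith
    then show ?thesis
      using K(1) by simp
  qed
  finally show ?thesis .
qed

lemma quadratic_form_sublevel_in_ball:
  fixes P :: "real^'n^'n"
  assumes l: "l > 0" "\<And>v. l * (norm v)\<^sup>2 \<le> v \<bullet> (P *v v)" and r: "r > 0"
    and z: "(z - c) \<bullet> (P *v (z - c)) \<le> l * r\<^sup>2 / 2"
  shows "norm (z - c) < r"
proof -
  have "l * (norm (z - c))\<^sup>2 \<le> l * r\<^sup>2 / 2"
    using l(2)[of "z - c"] z by linarith
  also have "\<dots> < l * r\<^sup>2"
    using l(1) r by simp
  finally have "(norm (z - c))\<^sup>2 < r\<^sup>2"
    using l(1) by simp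
  then show ?thesis
    using r by (simp add: power_less_imp_less_base)
qed

lemma pos_def_quadratic_form_lower_bound:
  assumes "pos_def P"
  obtains l where "l > 0" "\<And>v. l * (norm v)\<^sup>2 \<le> v \<bullet> (P *v v)"
proof -
  have cont: "continuous_on (sphere 0 1) (\<lambda>v. v \<bullet> (P *v v))"
    by (intro continuous_intros linear_continuous_on matrix_vector_mul_bounded_linear)
  obtain u where u: "u \<in> sphere 0 1" and min: "\<And>v. v \<in> sphere 0 1 \<Longrightarrow> u \<bullet> (P *v u) \<le> v \<bullet> (P *v v)"
    using continuous_attains_inf[OF compact_sphere _ cont] by auto
  have "u \<bullet> (P *v u) * (norm v)\<^sup>2 \<le> v \<bullet> (P *v v)" for v
  proof (cases "v = 0")
    case False
    have "u \<bullet> (P *v u) \<le> (v /\<^sub>R norm v) \<bullet> (P *v (v /\<^sub>R norm v))"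
      using False by (intro min) simp
    also have "\<dots> = v \<bullet> (P *v v) / (norm v)\<^sup>2"
      by (simp add: matrix_vector_mult_scaleR power2_eq_square divide_inverse)
    finally show ?thesis
      using False by (simp add: pos_le_divide_eq)
  qed simp
  moreover have "u \<bullet> (P *v u) > 0"
    using assms u unfolding pos_def_def by (metis norm_zero one_neq_zero mem_sphere_0)
  ultimately show ?thesis
    using that by blast
qed

lemma pos_def_add_small:
  fixes P0 P1 :: "real^3^3"
  assumes "pos_def P0" "transpose P1 = P1"
  obtains e where "e > 0" "pos_def (P0 + e *\<^sub>R P1)"
proof -
  obtain l where l: "l > 0" "\<And>v. l * (norm v)\<^sup>2 \<le> v \<bullet> (P0 *v v)"
    using pos_def_quadratic_form_lower_bound[OF assms(1)] by blast
  obtain K where K: "K > 0" "\<And>v. \<bar>v \<bullet> (P1 *v v)\<bar> \<le> K * (norm v)\<^sup>2"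
    using matrix_quadratic_form_bound by blast
  define e where "e = l / (2 * K)"
  have e: "e > 0"
    unfolding e_def using l(1) K(1) by simp
  have "pos_def (P0 + e *\<^sub>R P1)"
    unfolding pos_def_def
  proof (intro conjI allI impI)
    show "transpose (P0 + e *\<^sub>R P1) = P0 + e *\<^sub>R P1"
      using assms unfolding pos_def_def by (simp add: transpose_def vec_eq_iff)
    fix v :: "real^3" assume v: "v \<noteq> 0"
    have "e * \<bar>v \<bullet> (P1 *v v)\<bar> \<le> e * (K * (norm v)\<^sup>2)"
      using K(2)[of v] e by (intro mult_left_mono) auto
    also have "\<dots> = l / 2 * (norm v)\<^sup>2"
      unfolding e_def using K(1) by simp
    moreover have "e * (- \<bar>v \<bullet> (P1 *v v)\<bar>) \<le> e * (v \<bullet> (P1 *v v))"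
      using e by (intro mult_left_mono) auto
    ultimately have "- (l / 2 * (norm v)\<^sup>2) \<le> e * (v \<bullet> (P1 *v v))"
      by simp
    moreover have "l * (norm v)\<^sup>2 > 0"
      using l(1) v by simp
    moreover have "v \<bullet> ((P0 + e *\<^sub>R P1) *v v) = v \<bullet> (P0 *v v) + e * (v \<bullet> (P1 *v v))"
      by (simp add: matrix_vector_mult_add_rdistrib inner_add_right scaleR_matrix_vector_mult)
    ultimately show "v \<bullet> ((P0 + e *\<^sub>R P1) *v v) > 0"
      using l(2)[of v] by linarith
  qed
  with e that show ?thesis by blast
qed

lemma pos_def_congruence:
  fixes M T :: "real^3^3"
  assumes "pos_def M" and "\<And>v. T *v v = 0 \<Longrightarrow> v = 0"
  shows "pos_def (transpose T ** M ** T)"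
  unfolding pos_def_def
proof (intro conjI allI impI)
  show "transpose (transpose T ** M ** T) = transpose T ** M ** T"
    using assms(1) unfolding pos_def_def by (simp add: matrix_transpose_mul matrix_mul_assoc)
  fix v :: "real^3" assume "v \<noteq> 0"
  then have "(T *v v) \<bullet> (M *v (T *v v)) > 0"
    using assms unfolding pos_def_def by blast
  then show "v \<bullet> ((transpose T ** M ** T) *v v) > 0"
    by (simp only: matrix_vector_mul_assoc[symmetric] inner_transpose_matrix)
qed

lemma similar_lyapunov_stable:
  fixes A C T P Q :: "real^3^3"
  assumes "T ** A = C ** T" and "\<And>v. T *v v = 0 \<Longrightarrow> v = 0"
    and "pos_def P" and "pos_def Q" and "transpose C ** P + P ** C = - Q"
  obtains P' Q' where "pos_def P'" "pos_def Q'" "transpose A ** P' + P' ** A = - Q'"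
proof
  show "pos_def (transpose T ** P ** T)" "pos_def (transpose T ** Q ** T)"
    using assms(2-4) by (simp_all add: pos_def_congruence)
  show "transpose A ** (transpose T ** P ** T) + (transpose T ** P ** T) ** A
      = - (transpose T ** Q ** T)"
    using lyapunov_equation_similarity[OF assms(1,5)] by (simp add: matrix_uminus_sandwich)
qed

lemma similar_lyapunov_antistable:
  fixes A C T P Q :: "real^3^3"
  assumes "T ** A = C ** T" and "\<And>v. T *v v = 0 \<Longrightarrow> v = 0"
    and "transpose P = P" and "pos_def Q" and "transpose C ** P + P ** C = Q" and "v \<bullet> (P *v v) > 0"
  obtains P' Q' v' where "transpose P' = P'" "pos_def Q'" "transpose A ** P' + P' ** A = Q'"
    "v' \<bullet> (P' *v v') > 0"
proof -
  obtain B where "B ** T = mat 1"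
    using assms(2) matrix_left_invertible_ker by blast
  then have "T ** B = mat 1"
    by (simp add: matrix_left_right_inverse)
  then have TB: "T *v (B *v v) = v"
    by (simp add: matrix_vector_mul_assoc)
  show ?thesis
  proof (rule that)
    show "transpose (transpose T ** P ** T) = transpose T ** P ** T"
      using assms(3) by (simp add: matrix_transpose_mul matrix_mul_assoc)
    show "pos_def (transpose T ** Q ** T)"
      using assms(4,2) by (rule pos_def_congruence)
    show "transpose A ** (transpose T ** P ** T) + (transpose T ** P ** T) ** A = transpose T ** Q ** T"
      using assms(1,5) by (rule lyapunov_equation_similarity)
    show "(B *v v) \<bullet> ((transpose T ** P ** T) *v (B *v v)) > 0"
      using assms(6) by (simp only: matrix_vector_mul_assoc[symmetric] inner_transpose_matrix TB)
  qed
qed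

section \<open>Quadratic Lyapunov functions along solutions\<close>

lemma continuous_on_strict_bound_persists:
  fixes g :: "real \<Rightarrow> real"
  assumes cont: "continuous_on {0..<T} g" and start: "g 0 < r"
    and step: "\<And>t. t \<in> {0..<T} \<Longrightarrow> (\<And>s. s \<in> {0..t} \<Longrightarrow> g s \<le> r) \<Longrightarrow> g t < r"
    and t: "t \<in> {0..<T}"
  shows "g t < r"
proof (rule ccontr)
  assume "\<not> g t < r"
  define S where "S = {0..t} \<inter> g -` {r..}"
  have S_iff: "s \<in> S \<longleftrightarrow> 0 \<le> s \<and> s \<le> t \<and> r \<le> g s" for s
    by (simp add: S_def)
  have contt: "continuous_on {0..t} g"
    using t by (intro continuous_on_subset[OF cont]) auto
  have "closed S"
    unfolding S_def by (rule continuous_closed_preimage[OF contt closed_atLeastAtMost closed_atLeast])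
  moreover have "bounded S"
    by (rule bounded_subset[of "{0..t}"]) (auto simp: S_def)
  moreover have "t \<in> S"
    using \<open>\<not> g t < r\<close> t by (simp add: S_iff)
  ultimately obtain \<tau> where \<tau>: "\<tau> \<in> S" and first: "\<And>s. s \<in> S \<Longrightarrow> \<tau> \<le> s"
    using compact_attains_inf[of S] compact_eq_bounded_closed by blast
  have "continuous_on {0..\<tau>} g"
    using \<tau> by (intro continuous_on_subset[OF contt]) (auto simp: S_iff)
  then obtain s where s: "0 \<le> s" "s \<le> \<tau>" "g s = r"
    using IVT'[of g 0 r \<tau>] start \<tau> by (auto simp: S_iff)
  have "s \<in> S"
    using s \<tau> by (simp add: S_iff)
  with first s have g\<tau>: "g \<tau> = r"
    by force
  have "g \<tau> < r"
  proof (rule step)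
    show "\<tau> \<in> {0..<T}"
      using \<tau> t by (simp add: S_iff)
    fix s assume s: "s \<in> {0..\<tau>}"
    show "g s \<le> r"
    proof (rule ccontr)
      assume "\<not> g s \<le> r"
      then have "s \<in> S"
        using s \<tau> by (simp add: S_iff)
      then show False
        using first[of s] s g\<tau> \<open>\<not> g s \<le> r\<close> by simp
    qed
  qed
  then show False
    using g\<tau> by simp
qed

lemma continuous_on_le_at_right_end:
  fixes g :: "real \<Rightarrow> real"
  assumes "continuous_on {0..s} g" and "0 \<le> s" and "g 0 \<le> b" and "\<And>u. u \<in> {0..<s} \<Longrightarrow> g u \<le> b"
  shows "g s \<le> b"
proof (cases "s = 0")
  case False
  then have cl: "closure {0..<s} = {0..s}"
    using assms(2) by simp
  show ?thesis
    by (rule continuous_le_on_closure[of "{0..<s}"]) (use assms cl in auto)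
qed (use assms in simp)

lemma mvt_within:
  fixes g :: "real \<Rightarrow> real"
  assumes "a \<le> b" "{a..b} \<subseteq> S"
    and "\<And>t. t \<in> {a..b} \<Longrightarrow> (g has_real_derivative g' t) (at t within S)"
  shows "\<exists>\<xi>\<in>{a..b}. g b - g a = g' \<xi> * (b - a)"
proof -
  have "\<exists>\<xi>\<in>{a..b}. g b - g a = (\<lambda>h. g' \<xi> * h) (b - a)"
    by (rule mvt_very_simple[OF assms(1)])
      (use assms(2,3) in \<open>auto simp: has_field_derivative_def intro: has_derivative_subset\<close>)
  then show ?thesis by simp
qed

lemma has_real_derivative_quadratic_form:
  fixes P :: "real^'n^'n" and x :: "real \<Rightarrow> real^'n"
  assumes "transpose P = P" and "(x has_vector_derivative x') (at t within S)"
  shows "((\<lambda>t. (x t - c) \<bullet> (P *v (x t - c))) has_real_derivative 2 * ((x t - c) \<bullet> (P *v x')))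
    (at t within S)"
proof -
  have "((\<lambda>t. x t - c) has_derivative (\<lambda>h. h *\<^sub>R x')) (at t within S)"
    using assms(2) unfolding has_vector_derivative_def by (auto intro!: derivative_eq_intros)
  then have "((\<lambda>t. (x t - c) \<bullet> (P *v (x t - c))) has_derivative
      (\<lambda>h. (x t - c) \<bullet> (P *v (h *\<^sub>R x')) + (h *\<^sub>R x') \<bullet> (P *v (x t - c)))) (at t within S)"
    by (intro has_derivative_inner bounded_linear.has_derivative[OF matrix_vector_mul_bounded_linear])
  moreover have "(\<lambda>h. e \<bullet> (P *v (h *\<^sub>R x')) + (h *\<^sub>R x') \<bullet> (P *v e)) = (*) (2 * (e \<bullet> (P *v x')))"
    for e
    using inner_symmetric_matrix[OF assms(1), of x' e]
    by (simp add: fun_eq_iff matrix_vector_mult_scaleR algebra_simps)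
  ultimately show ?thesis
    unfolding has_field_derivative_def by simp
qed

lemma quadratic_form_mvt_along_solution:
  fixes f :: "real^'n \<Rightarrow> real^'n" and P :: "real^'n^'n" and c :: "real^'n"
  defines "V \<equiv> \<lambda>z. (z - c) \<bullet> (P *v (z - c))"
  assumes P: "transpose P = P" and x: "ode_sol_on f x T" and s: "0 \<le> s1" "s1 \<le> s2" "s2 < T"
  obtains \<xi> where "\<xi> \<in> {s1..s2}" "V (x s2) - V (x s1) = 2 * ((x \<xi> - c) \<bullet> (P *v f (x \<xi>))) * (s2 - s1)"
proof -
  have "((\<lambda>s. V (x s)) has_real_derivative 2 * ((x u - c) \<bullet> (P *v f (x u)))) (at u within {0..<T})"
    if "u \<in> {0..<T}" for u
    unfolding V_def
    by (rule has_real_derivative_quadratic_form[OF P]) (use x that in \<open>auto simp: ode_sol_on_def\<close>)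
  then have "\<exists>\<xi>\<in>{s1..s2}. V (x s2) - V (x s1) = 2 * ((x \<xi> - c) \<bullet> (P *v f (x \<xi>))) * (s2 - s1)"
    by (intro mvt_within[where S="{0..<T}"]) (use s in auto)
  with that show ?thesis
    by blast
qed

lemma quadratic_lyapunov_decay:
  fixes f :: "real^'n \<Rightarrow> real^'n" and P :: "real^'n^'n" and c :: "real^'n"
  defines "V \<equiv> \<lambda>z. (z - c) \<bullet> (P *v (z - c))"
  assumes P: "transpose P = P" and K: "K > 0" "\<And>v. v \<bullet> (P *v v) \<le> K * (norm v)\<^sup>2"
    and decrease: "\<And>z. norm (z - c) \<le> r \<Longrightarrow> 2 * ((z - c) \<bullet> (P *v f z)) \<le> - \<mu> * (norm (z - c))\<^sup>2"
    and \<mu>: "\<mu> > 0"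
    and inside: "\<And>z. V z \<le> \<rho> \<Longrightarrow> norm (z - c) < r"
    and x: "ode_sol_on f x T" "V (x 0) \<le> \<rho>" and t: "t \<in> {0..<T}"
  shows "(1 + \<mu> / K * t) * V (x t) \<le> V (x 0)"
proof -
  have nonincreasing: "V (x s2) \<le> V (x s1)"
    if s: "0 \<le> s1" "s1 \<le> s2" "s2 < T" and r: "\<And>s. s \<in> {s1..s2} \<Longrightarrow> norm (x s - c) \<le> r" for s1 s2
  proof -
    obtain \<xi> where \<xi>: "\<xi> \<in> {s1..s2}"
      and mvt: "V (x s2) - V (x s1) = 2 * ((x \<xi> - c) \<bullet> (P *v f (x \<xi>))) * (s2 - s1)"
      using quadratic_form_mvt_along_solution[OF P x(1) s] unfolding V_def by blast
    have "0 \<le> \<mu> * (norm (x \<xi> - c))\<^sup>2"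
      using \<mu> by simp
    then have "2 * ((x \<xi> - c) \<bullet> (P *v f (x \<xi>))) \<le> 0"
      using decrease[OF r[OF \<xi>]] by linarith
    then have "2 * ((x \<xi> - c) \<bullet> (P *v f (x \<xi>))) * (s2 - s1) \<le> 0"
      using s(2) by (simp add: mult_nonpos_nonneg)
    then show ?thesis
      using mvt by linarith
  qed
  have stays: "norm (x s - c) < r" if "s \<in> {0..<T}" for s
  proof (rule continuous_on_strict_bound_persists[OF _ _ _ that])
    show "continuous_on {0..<T} (\<lambda>s. norm (x s - c))"
      using x(1) unfolding ode_sol_on_def
      by (intro continuous_intros continuous_on_vector_derivative) blast
    show "norm (x 0 - c) < r"
      using inside x(2) .
    fix s assume "s \<in> {0..<T}" and "\<And>u. u \<in> {0..s} \<Longrightarrow> norm (x u - c) \<le> r"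
    then have "V (x s) \<le> V (x 0)"
      by (intro nonincreasing) auto
    then show "norm (x s - c) < r"
      using inside x(2) by simp
  qed
  define \<kappa> where "\<kappa> = \<mu> / K"
  have \<kappa>: "\<kappa> > 0"
    unfolding \<kappa>_def using \<mu> K(1) by simp
  obtain \<xi> where \<xi>: "\<xi> \<in> {0..t}" and mvt: "V (x t) - V (x 0) = 2 * ((x \<xi> - c) \<bullet> (P *v f (x \<xi>))) * t"
    using quadratic_form_mvt_along_solution[OF P x(1), of 0 t] t unfolding V_def by auto
  have "\<kappa> * V (x \<xi>) \<le> \<kappa> * (K * (norm (x \<xi> - c))\<^sup>2)"
    using K(2) \<kappa> unfolding V_def by (intro mult_left_mono) auto
  then have "2 * ((x \<xi> - c) \<bullet> (P *v f (x \<xi>))) \<le> - \<kappa> * V (x \<xi>)"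
    using decrease[of "x \<xi>"] stays[of \<xi>] \<xi> t K(1) by (simp add: \<kappa>_def)
  also have "\<dots> \<le> - \<kappa> * V (x t)"
    using mult_left_mono[OF nonincreasing[of \<xi> t], of \<kappa>] stays \<xi> t \<kappa> by (simp add: less_imp_le)
  finally have "2 * ((x \<xi> - c) \<bullet> (P *v f (x \<xi>))) * t \<le> - \<kappa> * V (x t) * t"
    by (rule mult_right_mono) (use t in simp)
  then show ?thesis
    using mvt by (simp add: \<kappa>_def[symmetric] algebra_simps)
qed

lemma quadratic_lyapunov_growth:
  fixes f :: "real^'n \<Rightarrow> real^'n" and P :: "real^'n^'n" and c :: "real^'n"
  defines "V \<equiv> \<lambda>z. (z - c) \<bullet> (P *v (z - c))"
  assumes P: "transpose P = P" and K: "K > 0" "\<And>v. v \<bullet> (P *v v) \<le> K * (norm v)\<^sup>2"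
    and increase: "\<And>z. norm (z - c) \<le> r \<Longrightarrow> \<mu> * (norm (z - c))\<^sup>2 \<le> 2 * ((z - c) \<bullet> (P *v f z))"
    and \<mu>: "\<mu> > 0"
    and x: "ode_sol_on f x T" "\<And>s. s \<in> {0..<T} \<Longrightarrow> norm (x s - c) \<le> r" and t: "t \<in> {0..<T}"
  shows "V (x 0) * (1 + \<mu> / K * t) \<le> V (x t)"
proof -
  define \<kappa> where "\<kappa> = \<mu> / K"
  have V'_ge: "\<kappa> * V (x s) \<le> 2 * ((x s - c) \<bullet> (P *v f (x s)))" if "s \<in> {0..<T}" for s
  proof -
    have "\<kappa> * V (x s) \<le> \<kappa> * (K * (norm (x s - c))\<^sup>2)"
      using K(2) \<mu> K(1) unfolding V_def \<kappa>_def by (intro mult_left_mono) auto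
    also have "\<dots> = \<mu> * (norm (x s - c))\<^sup>2"
      using K(1) by (simp add: \<kappa>_def)
    also have "\<dots> \<le> 2 * ((x s - c) \<bullet> (P *v f (x s)))"
      by (rule increase[OF x(2)[OF that]])
    finally show ?thesis .
  qed
  have nondecreasing: "V (x 0) \<le> V (x s)" if s: "s \<in> {0..<T}" for s
  proof -
    obtain \<xi> where \<xi>: "\<xi> \<in> {0..s}" and mvt: "V (x s) - V (x 0) = 2 * ((x \<xi> - c) \<bullet> (P *v f (x \<xi>))) * s"
      using quadratic_form_mvt_along_solution[OF P x(1), of 0 s] s unfolding V_def by auto
    have "0 \<le> \<mu> * (norm (x \<xi> - c))\<^sup>2"
      using \<mu> by simp
    also have "\<dots> \<le> 2 * ((x \<xi> - c) \<bullet> (P *v f (x \<xi>)))"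
      using \<xi> s by (intro increase x(2)) auto
    finally have "0 \<le> 2 * ((x \<xi> - c) \<bullet> (P *v f (x \<xi>))) * s"
      using s by simp
    then show ?thesis
      using mvt by linarith
  qed
  obtain \<xi> where \<xi>: "\<xi> \<in> {0..t}" and mvt: "V (x t) - V (x 0) = 2 * ((x \<xi> - c) \<bullet> (P *v f (x \<xi>))) * t"
    using quadratic_form_mvt_along_solution[OF P x(1), of 0 t] t unfolding V_def by auto
  have "\<kappa> * V (x 0) \<le> \<kappa> * V (x \<xi>)"
    using nondecreasing[of \<xi>] \<xi> t \<mu> K(1) unfolding \<kappa>_def by (intro mult_left_mono) auto
  also have "\<dots> \<le> 2 * ((x \<xi> - c) \<bullet> (P *v f (x \<xi>)))"
    using V'_ge[of \<xi>] \<xi> t by simp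
  finally have "\<kappa> * V (x 0) * t \<le> V (x t) - V (x 0)"
    using mvt t by (simp add: mult_right_mono)
  then show ?thesis
    by (simp add: \<kappa>_def[symmetric] algebra_simps)
qed

lemma quadratic_lyapunov_escape:
  fixes f :: "real^'n \<Rightarrow> real^'n" and P :: "real^'n^'n" and c :: "real^'n"
  defines "V \<equiv> \<lambda>z. (z - c) \<bullet> (P *v (z - c))"
  assumes P: "transpose P = P"
    and increase: "\<And>z. norm (z - c) \<le> r \<Longrightarrow> \<mu> * (norm (z - c))\<^sup>2 \<le> 2 * ((z - c) \<bullet> (P *v f z))"
    and \<mu>: "\<mu> > 0" and x: "ode_sol_global f x" and start: "V (x 0) > 0"
  shows "\<exists>t\<ge>0. r < norm (x t - c)"
proof (rule ccontr)
  assume "\<not> ?thesis"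
  then have inside: "norm (x s - c) \<le> r" if "0 \<le> s" for s
    using that by (simp add: not_less)
  obtain K where K: "K > 0" "\<And>v. \<bar>v \<bullet> (P *v v)\<bar> \<le> K * (norm v)\<^sup>2"
    using matrix_quadratic_form_bound by blast
  define t where "t = K\<^sup>2 * r\<^sup>2 / (\<mu> * V (x 0))"
  have t: "0 \<le> t"
    unfolding t_def using \<mu> start by simp
  have "V (x 0) * (1 + \<mu> / K * t) \<le> V (x t)"
    unfolding V_def
  proof (rule quadratic_lyapunov_growth[OF P K(1) _ increase \<mu>])
    show "v \<bullet> (P *v v) \<le> K * (norm v)\<^sup>2" for v
      using K(2)[of v] by simp
    show "ode_sol_on f x (t + 1)"
      using x by (rule ode_sol_global_imp_on)
  qed (use inside t in auto)
  also have "\<dots> \<le> K * (norm (x t - c))\<^sup>2"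
    unfolding V_def using K(2) abs_le_iff by blast
  also have "\<dots> \<le> K * r\<^sup>2"
    using inside[OF t] K(1) by (intro mult_left_mono power_mono) auto
  also have "\<dots> < V (x 0) * (1 + \<mu> / K * t)"
    unfolding t_def using K(1) \<mu> start by (simp add: field_simps power2_eq_square)
  finally show False
    by simp
qed

lemma tendsto_of_inverse_linear_decay:
  fixes x :: "real \<Rightarrow> 'a::real_normed_vector"
  assumes l: "l > 0" and \<kappa>: "\<kappa> > 0"
    and decay: "\<And>t. 0 \<le> t \<Longrightarrow> l * (norm (x t - c))\<^sup>2 \<le> W / (1 + \<kappa> * t)"
  shows "(x \<longlongrightarrow> c) at_top"
proof -
  have "eventually (\<lambda>t. norm (x t - c) \<le> sqrt (W / (1 + \<kappa> * t) / l)) at_top"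
    unfolding eventually_at_top_linorder
  proof (intro exI allI impI)
    fix t :: real assume "0 \<le> t"
    then have "(norm (x t - c))\<^sup>2 * l \<le> W / (1 + \<kappa> * t)"
      using decay[of t] by (simp only: mult.commute[of l])
    then have "(norm (x t - c))\<^sup>2 \<le> W / (1 + \<kappa> * t) / l"
      by (simp only: pos_le_divide_eq[OF l])
    then show "norm (x t - c) \<le> sqrt (W / (1 + \<kappa> * t) / l)"
      by (simp add: real_le_rsqrt)
  qed
  moreover have "((\<lambda>t. sqrt (W / (1 + \<kappa> * t) / l)) \<longlongrightarrow> 0) at_top"
  proof -
    have "filterlim (\<lambda>t. 1 + \<kappa> * t) at_top at_top"
      by (intro filterlim_tendsto_add_at_top[OF tendsto_const]
          filterlim_tendsto_pos_mult_at_top[OF tendsto_const \<kappa> filterlim_ident])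
    then have "((\<lambda>t. W / (1 + \<kappa> * t)) \<longlongrightarrow> 0) at_top"
      by (intro tendsto_divide_0[OF tendsto_const] filterlim_at_top_imp_at_infinity)
    then have "((\<lambda>t. W / (1 + \<kappa> * t) / l) \<longlongrightarrow> 0 / l) at_top"
      using l by (intro tendsto_divide tendsto_const) auto
    then show ?thesis
      using tendsto_real_sqrt by fastforce
  qed
  ultimately show ?thesis
    by (subst LIM_zero_iff[symmetric]) (rule Lim_null_comparison)
qed

section \<open>Lyapunov's indirect method\<close>

lemma linearization_lyapunov_estimate:
  fixes f :: "real^'n \<Rightarrow> real^'n" and A P M :: "real^'n^'n"
  assumes "f c = 0" and "(f has_derivative (\<lambda>h. A *v h)) (at c)"
    and "transpose P = P" and "transpose A ** P + P ** A = M" and "\<epsilon> > 0"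
  obtains r where "r > 0"
    "\<And>z. norm (z - c) \<le> r \<Longrightarrow>
       \<bar>2 * ((z - c) \<bullet> (P *v f z)) - (z - c) \<bullet> (M *v (z - c))\<bar> \<le> \<epsilon> * (norm (z - c))\<^sup>2"
proof -
  obtain K where K: "K > 0" "\<And>v. norm (P *v v) \<le> K * norm v"
    using matrix_quadratic_form_bound by blast
  obtain d where d: "d > 0"
    "\<And>z. norm (z - c) < d \<Longrightarrow> norm (f z - A *v (z - c)) \<le> \<epsilon> / (2 * K) * norm (z - c)"
  proof -
    have "\<epsilon> / (2 * K) > 0"
      using assms(5) K(1) by simp
    with assms(2) show ?thesis
      using that unfolding has_derivative_at_alt assms(1) by fastforce
  qed
  have "\<bar>2 * ((z - c) \<bullet> (P *v f z)) - (z - c) \<bullet> (M *v (z - c))\<bar> \<le> \<epsilon> * (norm (z - c))\<^sup>2"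
    if z: "norm (z - c) \<le> d / 2" for z
  proof -
    define e where "e = z - c"
    define R where "R = f z - A *v e"
    have "2 * (e \<bullet> (P *v f z)) - e \<bullet> (M *v e) = 2 * (e \<bullet> (P *v R))"
      using quadratic_form_lyapunov_equation[OF assms(3,4), of e]
      by (simp add: R_def matrix_vector_mult_diff_distrib inner_diff_right)
    also have "\<bar>\<dots>\<bar> \<le> 2 * (norm e * (K * norm R))"
      using Cauchy_Schwarz_ineq2[of e "P *v R"] mult_left_mono[OF K(2)[of R], of "norm e"] by simp
    also have "\<dots> \<le> 2 * (norm e * (K * (\<epsilon> / (2 * K) * norm e)))"
      using d(2)[of z] z d(1) K(1) unfolding R_def e_def
      by (intro mult_left_mono) auto
    also have "\<dots> = \<epsilon> * (norm e)\<^sup>2"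
      using K(1) by (simp add: power2_eq_square)
    finally show ?thesis
      unfolding e_def .
  qed
  then show ?thesis
    using that[of "d / 2"] d(1) by simp
qed

context
  fixes f :: "real^3 \<Rightarrow> real^3" and c :: "real^3" and A P Q :: "real^3^3"
  assumes equilibrium: "f c = 0"
    and linearization: "(f has_derivative (\<lambda>h. A *v h)) (at c)"
    and P: "pos_def P" and Q: "pos_def Q"
    and lyapunov: "transpose A ** P + P ** A = - Q"
    and locally_lipschitz: "\<And>R. \<exists>L. L-lipschitz_on (cball c R) f"
begin

(* Stated for every field g that agrees with f near c, so that it also covers the field
   retracted onto a ball, whose solutions exist globally. *)
lemma linearization_decay:
  obtains r \<rho>0 \<kappa> l where "r > 0" "\<rho>0 > 0" "\<kappa> > 0" "l > 0"
    "\<And>z. l * (norm (z - c))\<^sup>2 \<le> (z - c) \<bullet> (P *v (z - c))"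
    "\<And>z. (z - c) \<bullet> (P *v (z - c)) \<le> \<rho>0 \<Longrightarrow> norm (z - c) < r"
    "\<And>g x T t. (\<And>z. norm (z - c) \<le> r \<Longrightarrow> g z = f z) \<Longrightarrow> ode_sol_on g x T \<Longrightarrow>
       (x 0 - c) \<bullet> (P *v (x 0 - c)) \<le> \<rho>0 \<Longrightarrow> t \<in> {0..<T} \<Longrightarrow>
       (x t - c) \<bullet> (P *v (x t - c)) \<le> (x 0 - c) \<bullet> (P *v (x 0 - c)) \<and>
       l * (norm (x t - c))\<^sup>2 \<le> (x 0 - c) \<bullet> (P *v (x 0 - c)) / (1 + \<kappa> * t)"
proof -
  define V where "V z = (z - c) \<bullet> (P *v (z - c))" for z
  have Psym: "transpose P = P"
    using P unfolding pos_def_def by simp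
  obtain l where l: "l > 0" "\<And>v. l * (norm v)\<^sup>2 \<le> v \<bullet> (P *v v)"
    using pos_def_quadratic_form_lower_bound[OF P] by blast
  obtain q where q: "q > 0" "\<And>v. q * (norm v)\<^sup>2 \<le> v \<bullet> (Q *v v)"
    using pos_def_quadratic_form_lower_bound[OF Q] by blast
  obtain K where K: "K > 0" "\<And>v. \<bar>v \<bullet> (P *v v)\<bar> \<le> K * (norm v)\<^sup>2"
    using matrix_quadratic_form_bound by blast
  obtain r where r: "r > 0" and est: "\<And>z. norm (z - c) \<le> r \<Longrightarrow>
      \<bar>2 * ((z - c) \<bullet> (P *v f z)) - (z - c) \<bullet> (- Q *v (z - c))\<bar> \<le> q / 2 * (norm (z - c))\<^sup>2"
    using linearization_lyapunov_estimate[OF equilibrium linearization Psym lyapunov, of "q / 2"] q(1)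
    by auto
  have decrease: "2 * ((z - c) \<bullet> (P *v f z)) \<le> - (q / 2) * (norm (z - c))\<^sup>2"
    if "norm (z - c) \<le> r" for z
    using est[OF that] q(2)[of "z - c"]
    unfolding matrix_vector_mult_uminus_left inner_minus_right abs_le_iff by linarith
  define \<rho>0 where "\<rho>0 = l * r\<^sup>2 / 2"
  have inside: "norm (z - c) < r" if "V z \<le> \<rho>0" for z
    using quadratic_form_sublevel_in_ball[OF l r] that unfolding \<rho>0_def V_def .
  define \<kappa> where "\<kappa> = q / 2 / K"
  have "V (x t) \<le> V (x 0) \<and> l * (norm (x t - c))\<^sup>2 \<le> V (x 0) / (1 + \<kappa> * t)"
    if g: "\<And>z. norm (z - c) \<le> r \<Longrightarrow> g z = f z" and x: "ode_sol_on g x T" "V (x 0) \<le> \<rho>0"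
      and t: "t \<in> {0..<T}" for g x T t
  proof
    have decay: "(1 + \<kappa> * t) * V (x t) \<le> V (x 0)"
      unfolding \<kappa>_def V_def using x t
      by (intro quadratic_lyapunov_decay[OF Psym K(1) _ _ _ inside[unfolded V_def]])
        (use K(2) decrease g q(1) in \<open>auto simp: abs_le_iff V_def\<close>)
    have "0 \<le> l * (norm (x t - c))\<^sup>2" "l * (norm (x t - c))\<^sup>2 \<le> V (x t)" "0 \<le> \<kappa> * t"
      using l q(1) K(1) t unfolding V_def \<kappa>_def by auto
    then have "1 * V (x t) \<le> (1 + \<kappa> * t) * V (x t)"
      by (intro mult_right_mono) auto
    then show "V (x t) \<le> V (x 0)"
      using decay by simp
    have "V (x t) \<le> V (x 0) / (1 + \<kappa> * t)"
      using decay \<open>0 \<le> \<kappa> * t\<close> by (simp add: le_divide_eq mult.commute add_pos_nonneg)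
    then show "l * (norm (x t - c))\<^sup>2 \<le> V (x 0) / (1 + \<kappa> * t)"
      using \<open>l * (norm (x t - c))\<^sup>2 \<le> V (x t)\<close> by linarith
  qed
  moreover have "\<rho>0 > 0" "\<kappa> > 0"
    unfolding \<rho>0_def \<kappa>_def using l(1) r q(1) K(1) by simp_all
  ultimately show ?thesis
    using that[OF r _ _ l(1) l(2)] inside unfolding V_def by blast
qed

lemma linearization_sublevel_attraction:
  obtains \<rho>0 where "\<rho>0 > 0" "{z. (z - c) \<bullet> (P *v (z - c)) \<le> \<rho>0} \<subseteq> domain_of_attraction f c"
proof -
  define V where "V z = (z - c) \<bullet> (P *v (z - c))" for z
  obtain r \<rho>0 \<kappa> l where r: "r > 0" and \<rho>0: "\<rho>0 > 0" and \<kappa>: "\<kappa> > 0" and l: "l > 0"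
    and inside: "\<And>z. V z \<le> \<rho>0 \<Longrightarrow> norm (z - c) < r"
    and decay: "\<And>g x T t. (\<And>z. norm (z - c) \<le> r \<Longrightarrow> g z = f z) \<Longrightarrow> ode_sol_on g x T \<Longrightarrow>
       V (x 0) \<le> \<rho>0 \<Longrightarrow> t \<in> {0..<T} \<Longrightarrow>
       V (x t) \<le> V (x 0) \<and> l * (norm (x t - c))\<^sup>2 \<le> V (x 0) / (1 + \<kappa> * t)"
    using linearization_decay unfolding V_def by metis
  have "z0 \<in> domain_of_attraction f c" if z0: "V z0 \<le> \<rho>0" for z0
  proof -
    obtain L where "L-lipschitz_on (cball c r) f"
      using locally_lipschitz by blast
    then obtain y where y: "ode_sol_global (f \<circ> closest_point (cball c r)) y" "y 0 = z0"
      using truncated_global_solution r by (metis less_imp_le)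
    have Vy: "V (y t) \<le> V z0" if "0 \<le> t" for t
      using decay[OF comp_closest_point_cball ode_sol_global_imp_on[OF y(1)], of t "t + 1"] y(2) z0 that
      by simp
    have "norm (y t - c) < r" if "0 \<le> t" for t
      using inside[of "y t"] Vy[OF that] z0 by simp
    then have "ode_sol_global f y"
      by (intro ode_sol_global_cong[OF y(1)] comp_closest_point_cball less_imp_le)
    moreover have "(x \<longlongrightarrow> c) at_top" if x: "ode_sol_global f x" "x 0 = z0" for x
    proof (rule tendsto_of_inverse_linear_decay[OF l \<kappa>])
      fix t :: real assume "0 \<le> t"
      then show "l * (norm (x t - c))\<^sup>2 \<le> V z0 / (1 + \<kappa> * t)"
        using decay[OF _ ode_sol_global_imp_on[OF x(1)], of t "t + 1"] x(2) z0 by simp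
    qed
    ultimately show ?thesis
      unfolding domain_of_attraction_def using y(2) by blast
  qed
  with \<rho>0 that show ?thesis
    unfolding V_def by blast
qed

lemma linearization_lyap_stable: "lyap_stable f c"
  unfolding lyap_stable_def
proof (intro allI impI)
  fix \<epsilon> :: real assume \<epsilon>: "\<epsilon> > 0"
  define V where "V z = (z - c) \<bullet> (P *v (z - c))" for z
  obtain r \<rho>0 \<kappa> l where \<rho>0: "\<rho>0 > 0" and l: "\<And>z. l * (norm (z - c))\<^sup>2 \<le> V z" "l > 0"
    and decay: "\<And>x T t. ode_sol_on f x T \<Longrightarrow> V (x 0) \<le> \<rho>0 \<Longrightarrow> t \<in> {0..<T} \<Longrightarrow>
       V (x t) \<le> V (x 0) \<and> l * (norm (x t - c))\<^sup>2 \<le> V (x 0) / (1 + \<kappa> * t)"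
    using linearization_decay unfolding V_def by metis
  obtain K where K: "K > 0" "\<And>v. \<bar>v \<bullet> (P *v v)\<bar> \<le> K * (norm v)\<^sup>2"
    using matrix_quadratic_form_bound by blast
  define \<rho> where "\<rho> = min \<rho>0 (l * \<epsilon>\<^sup>2)"
  have \<rho>: "\<rho> > 0" "\<rho> \<le> \<rho>0" "\<rho> \<le> l * \<epsilon>\<^sup>2"
    unfolding \<rho>_def using \<rho>0 l \<epsilon> by auto
  show "\<exists>\<delta>>0. \<forall>x T. ode_sol_on f x T \<and> dist (x 0) c < \<delta> \<longrightarrow> (\<forall>t\<in>{0..<T}. dist (x t) c < \<epsilon>)"
  proof (intro exI conjI allI impI ballI)
    show "sqrt (\<rho> / K) > 0"
      using \<rho>(1) K(1) by simp
    fix x T t assume x: "ode_sol_on f x T \<and> dist (x 0) c < sqrt (\<rho> / K)" and t: "t \<in> {0..<T}"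
    have "V (x 0) < \<rho>"
      unfolding V_def using quadratic_form_less_near_center[OF K] x by (simp add: dist_norm)
    then have "V (x t) < \<rho>"
      using decay[of x T t] x t \<rho>(2) by simp
    then have "l * (norm (x t - c))\<^sup>2 < l * \<epsilon>\<^sup>2"
      using l(1)[of "x t"] \<rho>(3) by simp
    then have "(norm (x t - c))\<^sup>2 < \<epsilon>\<^sup>2"
      using l(2) by simp
    then show "dist (x t) c < \<epsilon>"
      using \<epsilon> by (simp add: dist_norm power_less_imp_less_base)
  qed
qed

lemma linearization_attracts_small_sublevel_sets:
  "\<exists>\<rho>0>0. \<forall>\<rho>. 0 < \<rho> \<and> \<rho> \<le> \<rho>0 \<longrightarrow>
     {z. (z - c) \<bullet> (P *v (z - c)) \<le> \<rho>} \<subseteq> domain_of_attraction f c"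
proof -
  obtain \<rho>0 where "\<rho>0 > 0" "{z. (z - c) \<bullet> (P *v (z - c)) \<le> \<rho>0} \<subseteq> domain_of_attraction f c"
    by (rule linearization_sublevel_attraction)
  then show ?thesis
    by (intro exI[of _ \<rho>0]) auto
qed

theorem linearization_loc_asym_stable: "loc_asym_stable f c"
proof -
  obtain \<rho>0 where \<rho>0: "\<rho>0 > 0" and sub: "{z. (z - c) \<bullet> (P *v (z - c)) \<le> \<rho>0} \<subseteq> domain_of_attraction f c"
    by (rule linearization_sublevel_attraction)
  obtain K where K: "K > 0" "\<And>v. \<bar>v \<bullet> (P *v v)\<bar> \<le> K * (norm v)\<^sup>2"
    using matrix_quadratic_form_bound by blast
  have "ball c (sqrt (\<rho>0 / K)) \<subseteq> {z. (z - c) \<bullet> (P *v (z - c)) \<le> \<rho>0}"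
  proof
    fix z assume "z \<in> ball c (sqrt (\<rho>0 / K))"
    then have "norm (z - c) < sqrt (\<rho>0 / K)"
      by (simp add: dist_norm norm_minus_commute)
    then show "z \<in> {z. (z - c) \<bullet> (P *v (z - c)) \<le> \<rho>0}"
      using quadratic_form_less_near_center[OF K] by (simp add: less_imp_le)
  qed
  with sub have "ball c (sqrt (\<rho>0 / K)) \<subseteq> domain_of_attraction f c"
    by blast
  moreover have "sqrt (\<rho>0 / K) > 0"
    using \<rho>0 K(1) by simp
  ultimately show ?thesis
    unfolding loc_asym_stable_def using linearization_lyap_stable by blast
qed

end

lemma lyap_stable_truncated_solutions_stay:
  fixes f :: "'a::euclidean_space \<Rightarrow> 'a"
  assumes stable: "lyap_stable f c" and r: "r > 0"
  obtains \<delta> where "\<delta> > 0"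
    "\<And>y t. ode_sol_global (f \<circ> closest_point (cball c r)) y \<Longrightarrow> norm (y 0 - c) < \<delta> \<Longrightarrow> 0 \<le> t \<Longrightarrow>
       norm (y t - c) < r"
proof -
  obtain \<delta> where \<delta>: "\<delta> > 0"
    and close: "\<And>x T. ode_sol_on f x T \<Longrightarrow> dist (x 0) c < \<delta> \<Longrightarrow> \<forall>t\<in>{0..<T}. dist (x t) c < r / 2"
    using stable r unfolding lyap_stable_def by (metis half_gt_zero)
  have "norm (y t - c) < r"
    if y: "ode_sol_global (f \<circ> closest_point (cball c r)) y" and y0: "norm (y 0 - c) < min \<delta> (r / 2)"
      and t: "0 \<le> t" for y t
  proof (rule continuous_on_strict_bound_persists[where T="t + 1" and g="\<lambda>s. norm (y s - c)"])
    have "continuous_on {0..} y"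
      using y unfolding ode_sol_global_def by (intro continuous_on_vector_derivative) auto
    then have cont: "continuous_on S (\<lambda>s. norm (y s - c))" if "S \<subseteq> {0..}" for S
      using that by (intro continuous_intros) (rule continuous_on_subset)
    show "continuous_on {0..<t + 1} (\<lambda>s. norm (y s - c))"
      by (rule cont) auto
    show "norm (y 0 - c) < r"
      using y0 r by simp
    fix s assume s: "s \<in> {0..<t + 1}" and "\<And>u. u \<in> {0..s} \<Longrightarrow> norm (y u - c) \<le> r"
    then have "ode_sol_on f y s"
      by (intro ode_sol_on_truncated[OF y]) auto
    then have before: "norm (y u - c) \<le> r / 2" if "u \<in> {0..<s}" for u
      using close[of y s] y0 that by (simp add: dist_norm less_imp_le)
    have "norm (y s - c) \<le> r / 2"
      by (rule continuous_on_le_at_right_end[OF cont]) (use s y0 before in auto)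
    then show "norm (y s - c) < r"
      using r by simp
  qed (use t in auto)
  moreover have "min \<delta> (r / 2) > 0"
    using \<delta> r by simp
  ultimately show ?thesis
    using that by blast
qed

theorem linearization_unstable:
  fixes f :: "real^3 \<Rightarrow> real^3" and c v :: "real^3" and A P Q :: "real^3^3"
  assumes equilibrium: "f c = 0"
    and linearization: "(f has_derivative (\<lambda>h. A *v h)) (at c)"
    and P: "transpose P = P" and Q: "pos_def Q"
    and lyapunov: "transpose A ** P + P ** A = Q"
    and v: "v \<bullet> (P *v v) > 0"
    and locally_lipschitz: "\<And>R. \<exists>L. L-lipschitz_on (cball c R) f"
  shows "unstable f c"
  unfolding unstable_def
proof
  assume stable: "lyap_stable f c"
  obtain q where q: "q > 0" "\<And>v. q * (norm v)\<^sup>2 \<le> v \<bullet> (Q *v v)"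
    using pos_def_quadratic_form_lower_bound[OF Q] by blast
  obtain r where r: "r > 0" and est: "\<And>z. norm (z - c) \<le> r \<Longrightarrow>
      \<bar>2 * ((z - c) \<bullet> (P *v f z)) - (z - c) \<bullet> (Q *v (z - c))\<bar> \<le> q / 2 * (norm (z - c))\<^sup>2"
    using linearization_lyapunov_estimate[OF equilibrium linearization P lyapunov, of "q / 2"] q(1)
    by auto
  have increase: "q / 2 * (norm (z - c))\<^sup>2 \<le> 2 * ((z - c) \<bullet> (P *v f z))"
    if "norm (z - c) \<le> r" for z
    using est[OF that] q(2)[of "z - c"] unfolding abs_le_iff by linarith
  obtain \<delta> where \<delta>: "\<delta> > 0"
    and stays: "\<And>y t. ode_sol_global (f \<circ> closest_point (cball c r)) y \<Longrightarrow> norm (y 0 - c) < \<delta> \<Longrightarrow>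
      0 \<le> t \<Longrightarrow> norm (y t - c) < r"
    using lyap_stable_truncated_solutions_stay[OF stable r] by blast
  define z0 where "z0 = c + (\<delta> / (2 * norm v)) *\<^sub>R v"
  have "v \<noteq> 0"
    using v by auto
  then have z0_near: "norm (z0 - c) < \<delta>"
    unfolding z0_def using \<delta> by simp
  have z0_pos: "(z0 - c) \<bullet> (P *v (z0 - c)) > 0"
    unfolding z0_def using v \<delta> \<open>v \<noteq> 0\<close> by (simp add: matrix_vector_mult_scaleR)
  obtain L where "L-lipschitz_on (cball c r) f"
    using locally_lipschitz by blast
  then obtain y where y: "ode_sol_global (f \<circ> closest_point (cball c r)) y" "y 0 = z0"
    using truncated_global_solution r by (metis less_imp_le)
  have y_stays: "norm (y t - c) < r" if "0 \<le> t" for t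
    using stays[OF y(1)] y(2) z0_near that by simp
  then have sol: "ode_sol_global f y"
    by (intro ode_sol_global_cong[OF y(1)] comp_closest_point_cball less_imp_le)
  obtain t where "t \<ge> 0" "r < norm (y t - c)"
    using quadratic_lyapunov_escape[OF P increase half_gt_zero[OF q(1)] sol] z0_pos y(2) by auto
  with y_stays show False
    by fastforce
qed

section \<open>Companion matrices of cubics\<close>

definition mat3 :: "'a::zero \<Rightarrow> 'a \<Rightarrow> 'a \<Rightarrow> 'a \<Rightarrow> 'a \<Rightarrow> 'a \<Rightarrow> 'a \<Rightarrow> 'a \<Rightarrow> 'a \<Rightarrow> 'a^3^3" where
  "mat3 a b c d e f g h i = vector [vector [a, b, c], vector [d, e, f], vector [g, h, i]]"

lemma mat3_nth [simp]:
  "mat3 a b c d e f g h i $ 1 $ 1 = a" "mat3 a b c d e f g h i $ 1 $ 2 = b" "mat3 a b c d e f g h i $ 1 $ 3 = c"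
  "mat3 a b c d e f g h i $ 2 $ 1 = d" "mat3 a b c d e f g h i $ 2 $ 2 = e" "mat3 a b c d e f g h i $ 2 $ 3 = f"
  "mat3 a b c d e f g h i $ 3 $ 1 = g" "mat3 a b c d e f g h i $ 3 $ 2 = h" "mat3 a b c d e f g h i $ 3 $ 3 = i"
  by (simp_all add: mat3_def)

lemma mat3_eq_iff: "(M :: 'a^3^3) = N \<longleftrightarrow> (\<forall>i j. M $ i $ j = N $ i $ j)"
  by (simp add: vec_eq_iff)

lemma vec3_eq_iff: "(x :: 'a^3) = y \<longleftrightarrow> x $ 1 = y $ 1 \<and> x $ 2 = y $ 2 \<and> x $ 3 = y $ 3"
  by (simp add: vec_eq_iff forall_3)

lemma mat3_mult:
  "mat3 a1 b1 c1 d1 e1 f1 g1 h1 i1 ** mat3 a2 b2 c2 d2 e2 f2 g2 h2 i2 =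
   mat3 (a1*a2 + b1*d2 + c1*g2) (a1*b2 + b1*e2 + c1*h2) (a1*c2 + b1*f2 + c1*i2)
        (d1*a2 + e1*d2 + f1*g2) (d1*b2 + e1*e2 + f1*h2) (d1*c2 + e1*f2 + f1*i2)
        (g1*a2 + h1*d2 + i1*g2) (g1*b2 + h1*e2 + i1*h2) (g1*c2 + h1*f2 + i1*i2)"
  for a1 :: "'a::semiring_1"
  by (simp add: mat3_eq_iff forall_3 matrix_matrix_mult_def sum_3)

lemma mat3_transpose: "transpose (mat3 a b c d e f g h i) = mat3 a d g b e h c f i"
  by (simp add: mat3_eq_iff forall_3 transpose_def)

lemma mat3_add:
  "mat3 a1 b1 c1 d1 e1 f1 g1 h1 i1 + mat3 a2 b2 c2 d2 e2 f2 g2 h2 i2 =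
   mat3 (a1+a2) (b1+b2) (c1+c2) (d1+d2) (e1+e2) (f1+f2) (g1+g2) (h1+h2) (i1+i2)"
  for a1 :: "'a::monoid_add"
  by (simp add: mat3_eq_iff forall_3)

lemma mat3_uminus: "- mat3 a b c d e f g h i = mat3 (-a) (-b) (-c) (-d) (-e) (-f) (-g) (-h) (-i)"
  for a :: "'a::group_add"
  by (simp add: mat3_eq_iff forall_3)

lemma mat3_scaleR:
  "r *\<^sub>R mat3 a b c d e f g h i = mat3 (r*a) (r*b) (r*c) (r*d) (r*e) (r*f) (r*g) (r*h) (r*i)"
  by (simp add: mat3_eq_iff forall_3)

lemma mat3_mult_vec:
  "mat3 a b c d e f g h i *v v =
   vector [a * v$1 + b * v$2 + c * v$3, d * v$1 + e * v$2 + f * v$3, g * v$1 + h * v$2 + i * v$3]"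
  for a :: "'a::semiring_1"
  by (simp add: vec3_eq_iff matrix_vector_mult_def sum_3)

lemma inner_vec3: "(x :: real^3) \<bullet> y = x$1 * y$1 + x$2 * y$2 + x$3 * y$3"
  by (simp add: inner_vec_def sum_3)

lemma pos_def_diagonal3:
  assumes "a > 0" "b > 0" "c > 0"
  shows "pos_def (mat3 a 0 0 0 b 0 0 0 c)"
  unfolding pos_def_def
proof (intro conjI allI impI)
  show "transpose (mat3 a 0 0 0 b 0 0 0 c) = mat3 a 0 0 0 b 0 0 0 c"
    by (simp add: mat3_transpose)
  fix v :: "real^3" assume "v \<noteq> 0"
  then have "0 < a * (v$1)\<^sup>2 \<or> 0 < b * (v$2)\<^sup>2 \<or> 0 < c * (v$3)\<^sup>2"
    using assms by (auto simp: vec3_eq_iff)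
  moreover have "0 \<le> a * (v$1)\<^sup>2" "0 \<le> b * (v$2)\<^sup>2" "0 \<le> c * (v$3)\<^sup>2"
    using assms by simp_all
  moreover have "v \<bullet> (mat3 a 0 0 0 b 0 0 0 c *v v) = a * (v$1)\<^sup>2 + b * (v$2)\<^sup>2 + c * (v$3)\<^sup>2"
    by (simp add: mat3_mult_vec inner_vec3 power2_eq_square algebra_simps)
  ultimately show "0 < v \<bullet> (mat3 a 0 0 0 b 0 0 0 c *v v)"
    by linarith
qed

definition companion3 :: "real \<Rightarrow> real \<Rightarrow> real \<Rightarrow> real^3^3" where
  "companion3 a0 a1 a2 = mat3 0 1 0 0 0 1 (-a0) (-a1) (-a2)"

lemma pos_def_routh_hurwitz_matrix:
  assumes a0: "a0 > 0" and a2: "a2 > 0" and hurwitz: "a1 * a2 > a0"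
  shows "pos_def (mat3 (a0\<^sup>2) (a0*a1) 0 (a0*a1) (a0*a2 + a1\<^sup>2) a0 0 a0 a1)" (is "pos_def ?P")
  unfolding pos_def_def
proof (intro conjI allI impI)
  show "transpose ?P = ?P"
    unfolding mat3_transpose ..
  fix v :: "real^3" assume v: "v \<noteq> 0"
  have sos: "a2 * (v \<bullet> (?P *v v))
      = a2 * (a0 * v$1 + a1 * v$2)\<^sup>2 + a0 * (a2 * v$2 + v$3)\<^sup>2 + (a1 * a2 - a0) * (v$3)\<^sup>2"
    unfolding mat3_mult_vec inner_vec3 by (simp add: power2_eq_square algebra_simps)
  have "a2 * (v \<bullet> (?P *v v)) > 0"
  proof (cases "v$3 = 0")
    case False
    then show ?thesis
      unfolding sos using a0 a2 hurwitz by (intro add_nonneg_pos) auto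
  next
    case v3: True
    show ?thesis
    proof (cases "v$2 = 0")
      case False
      then show ?thesis
        unfolding sos using v3 a0 a2 by (intro add_pos_nonneg add_nonneg_pos) auto
    next
      case True
      then have "v$1 \<noteq> 0"
        using v v3 by (simp add: vec3_eq_iff)
      then show ?thesis
        unfolding sos using v3 True a0 a2 by simp
    qed
  qed
  then show "v \<bullet> (?P *v v) > 0"
    using a2 by (simp add: zero_less_mult_iff)
qed

(* P0 solves the Lyapunov equation of the companion matrix with the semidefinite right-hand
   side -diag(0, 0, 2D), and P1 solves it with -diag(2 a0 D, 2D, 0); so P0 + e P1 gives a
   definite one, and stays positive definite for small e. *)
lemma companion3_hurwitz_lyapunov:
  assumes a0: "a0 > 0" and a2: "a2 > 0" and hurwitz: "a1 * a2 > a0"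
  obtains P Q where "pos_def P" "pos_def Q"
    "transpose (companion3 a0 a1 a2) ** P + P ** companion3 a0 a1 a2 = - Q"
proof -
  define D where "D = a1 * a2 - a0"
  have D: "D > 0"
    unfolding D_def using hurwitz by simp
  define P0 where "P0 = mat3 (a0\<^sup>2) (a0*a1) 0 (a0*a1) (a0*a2 + a1\<^sup>2) a0 0 a0 a1"
  define P1 where "P1 = mat3 (a1*D + a0*a2\<^sup>2 + a0*a2) (a2*D + a0*a2 + a0) D
                             (a2*D + a0*a2 + a0) (a2^3 - D + a1*a2 + a2\<^sup>2 + a1) (a2\<^sup>2 + a2)
                             D (a2\<^sup>2 + a2) (a2 + 1)"
  have "pos_def P0"
    unfolding P0_def using a0 a2 hurwitz by (rule pos_def_routh_hurwitz_matrix)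
  moreover have "transpose P1 = P1"
    unfolding P1_def mat3_transpose ..
  ultimately obtain e where e: "e > 0" "pos_def (P0 + e *\<^sub>R P1)"
    by (rule pos_def_add_small)
  have "pos_def (mat3 (2*a0*D*e) 0 0 0 (2*D*e) 0 0 0 (2*D))"
    using a0 D e(1) by (intro pos_def_diagonal3) auto
  moreover have "transpose (companion3 a0 a1 a2) ** (P0 + e *\<^sub>R P1)
      + (P0 + e *\<^sub>R P1) ** companion3 a0 a1 a2
      = - mat3 (2*a0*D*e) 0 0 0 (2*D*e) 0 0 0 (2*D)"
    unfolding companion3_def P0_def P1_def D_def
      mat3_scaleR mat3_add mat3_transpose mat3_mult mat3_uminus
    by (simp add: mat3_eq_iff forall_3 power2_eq_square power3_eq_cube algebra_simps)
  ultimately show ?thesis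
    using e(2) that by blast
qed

lemma cubic_positive_root:
  fixes a0 a1 a2 :: real
  assumes a0: "a0 < 0"
  obtains \<mu> where "\<mu> > 0" "\<mu>^3 + a2 * \<mu>\<^sup>2 + a1 * \<mu> + a0 = 0"
proof -
  define p where "p x = x^3 + a2 * x\<^sup>2 + a1 * x + a0" for x :: real
  define M where "M = 1 + \<bar>a0\<bar> + \<bar>a1\<bar> + \<bar>a2\<bar>"
  have M1: "M \<ge> 1"
    unfolding M_def by simp
  have "M\<^sup>2 \<ge> M"
    using M1 by (simp add: power2_eq_square)
  have "p M \<ge> 0"
  proof -
    have "M^3 = M\<^sup>2 + \<bar>a0\<bar> * M\<^sup>2 + \<bar>a1\<bar> * M\<^sup>2 + \<bar>a2\<bar> * M\<^sup>2"
      by (simp add: M_def power2_eq_square power3_eq_cube algebra_simps)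
    moreover have "\<bar>a0\<bar> * M\<^sup>2 \<ge> \<bar>a0\<bar>" "\<bar>a1\<bar> * M\<^sup>2 \<ge> \<bar>a1\<bar> * M"
      using \<open>M\<^sup>2 \<ge> M\<close> M1 mult_left_mono[of 1 "M\<^sup>2" "\<bar>a0\<bar>"] by (auto intro: mult_left_mono)
    moreover have "a2 * M\<^sup>2 \<ge> - (\<bar>a2\<bar> * M\<^sup>2)" "a1 * M \<ge> - (\<bar>a1\<bar> * M)" "a0 \<ge> - \<bar>a0\<bar>"
      using M1 by (auto simp: abs_if)
    ultimately show ?thesis
      unfolding p_def by (smt (verit) zero_le_power2)
  qed
  moreover have "continuous_on {0..M} p"
    unfolding p_def by (intro continuous_intros)
  ultimately obtain x where x: "0 \<le> x" "x \<le> M" "p x = 0"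
    using IVT'[of p 0 0 M] a0 M1 unfolding p_def by auto
  moreover have "x \<noteq> 0"
    using x(3) a0 unfolding p_def by auto
  ultimately show ?thesis
    using that[of x] unfolding p_def by simp
qed

lemma companion3_positive_eigenvector:
  assumes "a0 < 0"
  obtains \<mu> v where "\<mu> > 0" "v \<noteq> 0" "companion3 a0 a1 a2 *v v = \<mu> *\<^sub>R v"
proof -
  obtain \<mu> where \<mu>: "\<mu> > 0" "\<mu>^3 + a2 * \<mu>\<^sup>2 + a1 * \<mu> + a0 = 0"
    using cubic_positive_root[OF assms] by blast
  have "companion3 a0 a1 a2 *v vector [1, \<mu>, \<mu>\<^sup>2] = \<mu> *\<^sub>R vector [1, \<mu>, \<mu>\<^sup>2]"
    using \<mu>(2) unfolding companion3_def mat3_mult_vec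
    by (simp add: vec3_eq_iff power2_eq_square power3_eq_cube algebra_simps)
  moreover have "vector [1, \<mu>, \<mu>\<^sup>2] \<noteq> (0 :: real^3)"
    by (simp add: vec3_eq_iff)
  ultimately show ?thesis
    using \<mu>(1) that by blast
qed

lemma quadratic_form_pos_at_eigenvector:
  fixes A P Q :: "real^3^3"
  assumes "transpose P = P" and "pos_def Q" and "transpose A ** P + P ** A = Q"
    and "A *v v = \<mu> *\<^sub>R v" and "\<mu> > 0" and "v \<noteq> 0"
  shows "v \<bullet> (P *v v) > 0"
proof -
  have "2 * \<mu> * (v \<bullet> (P *v v)) = v \<bullet> (Q *v v)"
    using quadratic_form_lyapunov_equation[OF assms(1,3), of v] assms(4)
    by (simp add: matrix_vector_mult_scaleR)
  also have "\<dots> > 0"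
    using assms(2,6) unfolding pos_def_def by blast
  finally show ?thesis
    using assms(5) by (simp add: zero_less_mult_iff)
qed

(* The free entry p33 of P only serves to make Q definite. *)

lemma companion3_antistable_lyapunov:
  assumes a0: "a0 < 0" and a2: "a2 > 0"
  obtains P Q v where "transpose P = P" "pos_def Q"
    "transpose (companion3 a0 a1 a2) ** P + P ** companion3 a0 a1 a2 = Q" "v \<bullet> (P *v v) > 0"
proof -
  define D where "D = a1 * a2 - a0"
  obtain p33 where p33: "2 * p33 * D + 2 * a2 - 2 * a1 > 0"
  proof (cases "D = 0")
    case True
    then have "a1 * a2 < 0"
      using a0 unfolding D_def by simp
    then have "a1 < 0"
      using a2 by (simp add: mult_less_0_iff)
    then show ?thesis
      using that[of 0] a2 by simp
  next
    case False
    then have "2 * ((\<bar>a1\<bar> + 1) / D) * D + 2 * a2 - 2 * a1 = 2 * \<bar>a1\<bar> + 2 + 2 * a2 - 2 * a1"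
      by simp
    also have "\<dots> > 0"
      using a2 by (simp add: abs_if)
    finally show ?thesis
      by (rule that)
  qed
  define P where "P = mat3 (a1 - a0 * (a2 * p33 - 1)) (a2 - a0 * p33) 1
                          (a2 - a0 * p33) (- (a2 * (a2 * p33 - 1) + 1 + a1 * p33)) (- (a2 * p33 - 1))
                          1 (- (a2 * p33 - 1)) (- p33)"
  define Q where "Q = mat3 (- 2 * a0) 0 0 0 (2 * p33 * D + 2 * a2 - 2 * a1) 0 0 0 2"
  have P: "transpose P = P"
    unfolding P_def mat3_transpose ..
  have Q: "pos_def Q"
    unfolding Q_def using a0 p33 by (intro pos_def_diagonal3) auto
  have lyap: "transpose (companion3 a0 a1 a2) ** P + P ** companion3 a0 a1 a2 = Q"
    unfolding companion3_def P_def Q_def D_def mat3_transpose mat3_mult mat3_add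
    by (simp add: mat3_eq_iff forall_3 algebra_simps)
  obtain \<mu> v where "\<mu> > 0" "v \<noteq> 0" "companion3 a0 a1 a2 *v v = \<mu> *\<^sub>R v"
    using companion3_positive_eigenvector[OF a0] by blast
  then have "v \<bullet> (P *v v) > 0"
    using P Q lyap by (intro quadratic_form_pos_at_eigenvector) auto
  with P Q lyap that show ?thesis
    by blast
qed

section \<open>The boost converter under PI control\<close>

definition boost_jacobian :: "real \<Rightarrow> real \<Rightarrow> real \<Rightarrow> real \<Rightarrow> real \<Rightarrow> real \<Rightarrow> real^3 \<Rightarrow> real^3^3" where
  "boost_jacobian d1 d2 ys KP KI u0 z =
     mat3 (-d1) (-u0 - KI * z$3 - KP * ys + 2 * KP * z$2) (-KI * z$2)
          (u0 + KI * z$3 + KP * ys - KP * z$2) (-d2 - KP * z$1) (KI * z$1)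
          0 (-1) 0"

lemma has_derivative_boost_f:
  "(boost_f d1 d2 ys KP KI u0 has_derivative (\<lambda>h. boost_jacobian d1 d2 ys KP KI u0 z *v h)) (at z)"
proof (rule has_derivative_vec_componentwise)
  fix i :: 3
  show "((\<lambda>x. boost_f d1 d2 ys KP KI u0 x $ i) has_derivative
      (\<lambda>h. (boost_jacobian d1 d2 ys KP KI u0 z *v h) $ i)) (at z)"
    using exhaust_3[of i]
    by (elim disjE) (auto simp: boost_f_def boost_jacobian_def mat3_mult_vec power2_eq_square
        algebra_simps intro!: derivative_eq_intros)
qed

lemma boost_f_locally_lipschitz: "\<exists>L. L-lipschitz_on (cball c R) (boost_f d1 d2 ys KP KI u0)"
proof (rule lipschitz_on_cball_of_continuous_jacobian[OF has_derivative_boost_f])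
  fix i j :: 3
  show "continuous_on UNIV (\<lambda>z. boost_jacobian d1 d2 ys KP KI u0 z $ i $ j)"
    using exhaust_3[of i] exhaust_3[of j]
    by (elim disjE) (auto simp: boost_jacobian_def intro!: continuous_intros)
qed

lemma boost_f_eq_0_iff:
  "boost_f d1 d2 ys KP KI u0 z = 0 \<longleftrightarrow>
     z$2 = ys \<and> ys * (u0 + KI * z$3) = 1 - d1 * z$1 \<and> z$1 * (u0 + KI * z$3) = d2 * ys"
proof (cases "z$2 = ys")
  case True
  then show ?thesis
    by (auto simp: boost_f_def vec3_eq_iff power2_eq_square algebra_simps)
qed (auto simp: boost_f_def vec3_eq_iff)

(* The rows of this matrix are e3, e3 J and e3 J^2 for the Jacobian J, i.e. the observability
   matrix of the integrator state; it conjugates J to companion form. *)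
definition boost_obs :: "real \<Rightarrow> real \<Rightarrow> real \<Rightarrow> real \<Rightarrow> real^3 \<Rightarrow> real^3^3" where
  "boost_obs d2 KP KI u0 z = mat3 0 0 1 0 (-1) 0 (- (u0 + KI * z$3)) (d2 + KP * z$1) (- KI * z$1)"

lemma boost_obs_similar_companion3:
  assumes "boost_f d1 d2 ys KP KI u0 z = 0" and "ys \<noteq> 0"
  defines "X \<equiv> z$1" and "w \<equiv> u0 + KI * z$3"
  shows "boost_obs d2 KP KI u0 z ** boost_jacobian d1 d2 ys KP KI u0 z =
    companion3 (KI * (2 * d1 * X - 1)) (d1 * d2 + KP * (2 * d1 * X - 1) + w\<^sup>2 + KI * X)
      (d1 + d2 + KP * X) ** boost_obs d2 KP KI u0 z"
proof -
  have z2: "z$2 = ys" and "ys * (u0 + KI * z$3) = 1 - d1 * z$1"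
    using assms(1) unfolding boost_f_eq_0_iff by auto
  then have u0: "u0 = (1 - d1 * z$1) / ys - KI * z$3"
    using assms(2) by (simp add: field_simps)
  show ?thesis
    unfolding X_def w_def u0 using z2 assms(2)
    by (simp add: boost_obs_def boost_jacobian_def companion3_def mat3_mult mat3_eq_iff forall_3
        power2_eq_square field_simps)
qed

lemma boost_obs_injective:
  assumes "boost_f d1 d2 ys KP KI u0 z = 0" and "d2 > 0" and "ys > 0"
    and "boost_obs d2 KP KI u0 z *v v = 0"
  shows "v = 0"
proof -
  have "u0 + KI * z$3 \<noteq> 0"
    using assms(1-3) unfolding boost_f_eq_0_iff by auto
  then show ?thesis
    using assms(4) by (auto simp: boost_obs_def mat3_mult_vec vec3_eq_iff)
qed

locale boost_converter =
  fixes d1 d2 ys KP KI u0 :: real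
  assumes d1: "d1 > 0" and d2: "d2 > 0" and ys: "ys > 0"
    and small_load: "d1 * d2 < 1 / (4 * ys\<^sup>2)"
    and KP: "KP \<ge> 0" and KI: "KI > 0"
begin

abbreviation "closed_loop \<equiv> boost_f d1 d2 ys KP KI u0"
abbreviation "jac \<equiv> boost_jacobian d1 d2 ys KP KI u0"
abbreviation "x_min \<equiv> chi_u d1 d2 ys KI u0"
abbreviation "x_max \<equiv> chi_s d1 d2 ys KI u0"

definition sqrt_disc :: real where "sqrt_disc = sqrt (1 - 4 * d1 * d2 * ys\<^sup>2)"

lemma sqrt_disc_bounds: "0 < sqrt_disc" "sqrt_disc < 1"
proof -
  have "4 * d1 * d2 * ys\<^sup>2 < 1"
    using small_load ys by (simp add: field_simps)
  moreover have "0 < 4 * d1 * d2 * ys\<^sup>2"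
    using d1 d2 ys by simp
  ultimately show "0 < sqrt_disc" "sqrt_disc < 1"
    unfolding sqrt_disc_def by simp_all
qed

lemma x_min_eq:
  "x_min = vector [(1 - sqrt_disc) / (2 * d1), ys,
                   (1 - d1 * ((1 - sqrt_disc) / (2 * d1)) - u0 * ys) / (KI * ys)]"
  unfolding chi_u_def sqrt_disc_def Let_def ..

lemma x_max_eq:
  "x_max = vector [(1 + sqrt_disc) / (2 * d1), ys,
                   (1 - d1 * ((1 + sqrt_disc) / (2 * d1)) - u0 * ys) / (KI * ys)]"
  unfolding chi_s_def sqrt_disc_def Let_def ..

lemma equilibrium_iff: "closed_loop z = 0 \<longleftrightarrow> z = x_min \<or> z = x_max"
proof -
  have S2: "sqrt_disc\<^sup>2 = 1 - 4 * d1 * d2 * ys\<^sup>2"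
    using sqrt_disc_bounds(1) unfolding sqrt_disc_def by simp
  have root: "z$1 * (1 - d1 * z$1) = d2 * ys * ys \<longleftrightarrow>
      z$1 = (1 - sqrt_disc) / (2 * d1) \<or> z$1 = (1 + sqrt_disc) / (2 * d1)"
  proof -
    have "(2 * d1 * z$1 - 1)\<^sup>2 - sqrt_disc\<^sup>2 = 4 * d1 * (d2 * ys * ys - z$1 * (1 - d1 * z$1))"
      unfolding S2 by (simp add: power2_eq_square algebra_simps)
    then have "z$1 * (1 - d1 * z$1) = d2 * ys * ys \<longleftrightarrow> (2 * d1 * z$1 - 1)\<^sup>2 = sqrt_disc\<^sup>2"
      using d1 by (metis diff_self eq_iff_diff_eq_0 mult_eq_0_iff zero_neq_numeral less_irrefl)
    also have "\<dots> \<longleftrightarrow> 2 * d1 * z$1 - 1 = - sqrt_disc \<or> 2 * d1 * z$1 - 1 = sqrt_disc"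
      by (auto simp: power2_eq_iff)
    also have "\<dots> \<longleftrightarrow> z$1 = (1 - sqrt_disc) / (2 * d1) \<or> z$1 = (1 + sqrt_disc) / (2 * d1)"
      using d1 by (auto simp: field_simps)
    finally show ?thesis .
  qed
  have "closed_loop z = 0 \<longleftrightarrow> z$2 = ys \<and> z$3 = (1 - d1 * z$1 - u0 * ys) / (KI * ys) \<and>
      z$1 * (1 - d1 * z$1) = d2 * ys * ys"
  proof -
    have "ys * (u0 + KI * z$3) = 1 - d1 * z$1 \<longleftrightarrow> z$3 = (1 - d1 * z$1 - u0 * ys) / (KI * ys)"
      using ys KI by (auto simp: field_simps)
    moreover have "z$1 * (u0 + KI * z$3) = d2 * ys \<longleftrightarrow> z$1 * (1 - d1 * z$1) = d2 * ys * ys"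
      if "ys * (u0 + KI * z$3) = 1 - d1 * z$1"
    proof -
      have "z$1 * (1 - d1 * z$1) = ys * (z$1 * (u0 + KI * z$3))"
        unfolding that[symmetric] by simp
      then show ?thesis
        using ys by auto
    qed
    ultimately show ?thesis
      unfolding boost_f_eq_0_iff by blast
  qed
  also have "\<dots> \<longleftrightarrow> z = x_min \<or> z = x_max"
    unfolding root x_min_eq x_max_eq by (auto simp: vec3_eq_iff)
  finally show ?thesis .
qed

lemma x_max_lyapunov:
  obtains P Q where "pos_def P" "pos_def Q" "transpose (jac x_max) ** P + P ** jac x_max = - Q"
proof -
  define X w where "X = x_max$1" and "w = u0 + KI * x_max$3"
  have eq: "closed_loop x_max = 0"
    using equilibrium_iff by simp
  have X: "X = (1 + sqrt_disc) / (2 * d1)"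
    unfolding X_def x_max_eq by simp
  then have X_pos: "X > 0"
    using d1 sqrt_disc_bounds by simp
  have disc: "2 * d1 * X - 1 = sqrt_disc"
    unfolding X using d1 by simp
  define a1 where "a1 = d1 * d2 + KP * (2 * d1 * X - 1) + w\<^sup>2 + KI * X"
  have "KI * sqrt_disc < KI * X * d1"
    using KI sqrt_disc_bounds unfolding X using d1 by (simp add: field_simps)
  also have "\<dots> \<le> a1 * (d1 + d2 + KP * X)"
    unfolding a1_def disc using d1 d2 KP KI X_pos sqrt_disc_bounds
    by (intro mult_mono) (auto intro!: add_nonneg_nonneg)
  finally have "KI * (2 * d1 * X - 1) < a1 * (d1 + d2 + KP * X)"
    unfolding disc .
  moreover have "KI * (2 * d1 * X - 1) > 0" "d1 + d2 + KP * X > 0"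
    using KI sqrt_disc_bounds disc d1 d2 KP X_pos by (simp_all add: add_pos_nonneg)
  ultimately obtain Pc Qc where "pos_def Pc" "pos_def Qc"
    "transpose (companion3 (KI * (2 * d1 * X - 1)) a1 (d1 + d2 + KP * X)) ** Pc
       + Pc ** companion3 (KI * (2 * d1 * X - 1)) a1 (d1 + d2 + KP * X) = - Qc"
    using companion3_hurwitz_lyapunov by blast
  then show ?thesis
    using similar_lyapunov_stable[OF boost_obs_similar_companion3[OF eq]
        boost_obs_injective[OF eq d2 ys]]
      ys that unfolding a1_def X_def w_def by auto
qed

lemma x_min_lyapunov:
  obtains P Q v where "transpose P = P" "pos_def Q" "transpose (jac x_min) ** P + P ** jac x_min = Q"
    "v \<bullet> (P *v v) > 0"
proof -
  define X w where "X = x_min$1" and "w = u0 + KI * x_min$3"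
  define a1 where "a1 = d1 * d2 + KP * (2 * d1 * X - 1) + w\<^sup>2 + KI * X"
  have eq: "closed_loop x_min = 0"
    using equilibrium_iff by simp
  have X: "X = (1 - sqrt_disc) / (2 * d1)"
    unfolding X_def x_min_eq by simp
  then have X_pos: "X > 0"
    using d1 sqrt_disc_bounds by simp
  have disc: "2 * d1 * X - 1 = - sqrt_disc"
    unfolding X using d1 by simp
  have "KI * (2 * d1 * X - 1) < 0" "d1 + d2 + KP * X > 0"
    using KI sqrt_disc_bounds disc d1 d2 KP X_pos by (simp_all add: add_pos_nonneg)
  then obtain Pc Qc v where "transpose Pc = Pc" "pos_def Qc"
    "transpose (companion3 (KI * (2 * d1 * X - 1)) a1 (d1 + d2 + KP * X)) ** Pc
       + Pc ** companion3 (KI * (2 * d1 * X - 1)) a1 (d1 + d2 + KP * X) = Qc" "v \<bullet> (Pc *v v) > 0"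
    using companion3_antistable_lyapunov by metis
  then show ?thesis
    using similar_lyapunov_antistable[OF boost_obs_similar_companion3[OF eq]
        boost_obs_injective[OF eq d2 ys]]
      ys that unfolding a1_def X_def w_def by auto
qed

theorem x_min_unstable: "unstable closed_loop x_min"
proof -
  obtain P Q v where "transpose P = P" "pos_def Q" "transpose (jac x_min) ** P + P ** jac x_min = Q"
    "v \<bullet> (P *v v) > 0"
    by (rule x_min_lyapunov)
  then show ?thesis
    using equilibrium_iff
    by (intro linearization_unstable[OF _ has_derivative_boost_f _ _ _ _ boost_f_locally_lipschitz])
      auto
qed

theorem x_max_loc_asym_stable: "loc_asym_stable closed_loop x_max"
proof -
  obtain P Q where "pos_def P" "pos_def Q" "transpose (jac x_max) ** P + P ** jac x_max = - Q"
    by (rule x_max_lyapunov)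
  then show ?thesis
    using equilibrium_iff
    by (intro linearization_loc_asym_stable[OF _ has_derivative_boost_f _ _ _ boost_f_locally_lipschitz])
      auto
qed

theorem x_max_attracts_small_sublevel_sets:
  assumes "(closed_loop has_derivative (\<lambda>h. A *v h)) (at x_max)"
    and "pos_def Q" and "pos_def P" and "transpose A ** P + P ** A = - Q"
  shows "\<exists>\<rho>0>0. \<forall>\<rho>. 0 < \<rho> \<and> \<rho> \<le> \<rho>0 \<longrightarrow>
    {z. (z - x_max) \<bullet> (P *v (z - x_max)) \<le> \<rho>} \<subseteq> domain_of_attraction closed_loop x_max"
  using equilibrium_iff assms
  by (intro linearization_attracts_small_sublevel_sets[OF _ _ _ _ _ boost_f_locally_lipschitz]) auto

end

theorem proposition2:
  fixes d1 d2 ys KP KI u0 :: real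
  assumes "d1 > 0" and "d2 > 0" and "ys > 0"
    and "d1 * d2 < 1 / (4 * ys^2)"
    and "KP \<ge> 0" and "KI > 0"
  defines "f \<equiv> boost_f d1 d2 ys KP KI u0"
    and "xu \<equiv> chi_u d1 d2 ys KI u0"
    and "xs \<equiv> chi_s d1 d2 ys KI u0"
  shows
    "({z. equilibrium f z} = {xu, xs} \<and> xu \<noteq> xs \<and> xu $ 2 = ys \<and> xs $ 2 = ys)
     \<and> unstable f xu
     \<and> (KP \<ge> d1^2 / 2 \<and> KI \<ge> 5 / 16 * d1 / ys^2 \<longrightarrow> loc_asym_stable f xs)
     \<and> (KP \<ge> d1^2 / 2 \<and> KI \<ge> 5 / 16 * d1 / ys^2 \<longrightarrow>
          (\<forall>A P Q :: real^3^3.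
             (f has_derivative (\<lambda>h. A *v h)) (at xs) \<and>
             pos_def Q \<and> pos_def P \<and> transpose A ** P + P ** A = - Q \<longrightarrow>
             (\<exists>\<rho>0>0. \<forall>\<rho>. 0 < \<rho> \<and> \<rho> \<le> \<rho>0 \<longrightarrow>
                {z. (z - xs) \<bullet> (P *v (z - xs)) \<le> \<rho>} \<subseteq> domain_of_attraction f xs)))"
proof -
  interpret boost_converter d1 d2 ys KP KI u0
    using assms(1-6) by unfold_locales
  have "{z. equilibrium f z} = {xu, xs}"
    unfolding f_def xu_def xs_def equilibrium_def using equilibrium_iff by auto
  moreover have "xu \<noteq> xs" "xu $ 2 = ys" "xs $ 2 = ys"
    unfolding xu_def xs_def x_min_eq x_max_eq using sqrt_disc_bounds assms(1) by (auto simp: vec3_eq_iff)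
  ultimately show ?thesis
    unfolding f_def xu_def xs_def
    using x_min_unstable x_max_loc_asym_stable x_max_attracts_small_sublevel_sets by blast
qed

end
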